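(* Let $W^B$ be a channel from $\mathcal X$ to $\mathcal Y$ and $W^E$ a channel from $\mathcal X$ to a finite set $\mathcal Z$. For any positive integers $L,M$, any reals $C,C'>0$, and any probability distribution $p$ on $\mathcal X$, there exists a wire-tap code $\Phi$ with $|\Phi|=M$ satisfying simultaneously $$\epsilon_B(\Phi)\le 3\min_{0\le s\le1}(ML)^s\sum_y\Big(\mathrm{E}_p\,W^B_x(y)^{1/(1+s)}\Big)^{1+s},$$ $$\epsilon_B(\Phi)\le 3\Big(\mathrm{E}_p\,W^B_x\Big\{y:\tfrac{W^B_x(y)}{W^B_p(y)}\le C'\Big\}+\frac{ML}{C'}\Big),$$ $$I_E(\Phi)\le 3\Big(\eta(\delta_{p,W^E,C})+\delta_{p,W^E,C}\log|\mathcal Z|+\frac{\delta'_{p,W^E,C}}{L}\Big),$$ $$I_E(\Phi)\le 3\min_{-1/2\le t<0}\frac{\log\big(1+L^te^{\phi(t|W^E,p)}\big)}{-t},$$ $$d_E(\Phi)\le 6\Big(2\delta_{p,W^E,C}+\sqrt{\frac{\delta'_{p,W^E,C}}{L}}\Big).$$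
   Context: A channel $W$ from a finite or countable set $\mathcal X$ to a finite or countable set $\mathcal Y$ is a map $x\mapsto W_x$ assigning a probability distribution $W_x$ on $\mathcal Y$; $W_p(y):=\sum_x p(x)W_x(y)$, $W_Q$ likewise for any distribution $Q$ on $\mathcal X$, and $\mathrm{E}_p$ is expectation over $x\sim p$. A wire-tap code for the pair $(W^B,W^E)$ is a triple $\Phi=(M,\{Q_1,\dots,Q_M\},\{\mathcal D_1,\dots,\mathcal D_M\})$ with $Q_i$ probability distributions on $\mathcal X$ and $\mathcal D_1,\dots,\mathcal D_M$ pairwise disjoint subsets of $\mathcal Y$; $|\Phi|:=M$. Its performance quantities: $\epsilon_B(\Phi):=\frac1M\sum_{i=1}^MW^B_{Q_i}(\mathcal D_i^c)$; $I_E(\Phi):=\sum_i\frac1M D(W^E_{Q_i}\|W^E_\Phi)$ with $W^E_\Phi:=\sum_i\frac1M W^E_{Q_i}$; $d_E(\Phi):=\frac{1}{M(M-1)}\sum_{i\neq j}d(W^E_{Q_i},W^E_{Q_j})$, where $d(q,r)=\sum_z|q(z)-r(z)|$ and $D(q\|r)=\sum q\log(q/r)$. Further, $\delta_{p,W,C}:=\sum_x p(x)\sum_{y:\,W_x(y)>CW_p(y)}W_x(y)$, $\delta'_{p,W,C}:=\sum_x p(x)\sum_{y:\,W_x(y)\le CW_p(y),\,W_p(y)>0}\frac{W_x(y)^2}{W_p(y)}$, $\phi(t|W,p):=\log\sum_y\big(\sum_xp(x)W_x(y)^{1/(1+t)}\big)^{1+t}$, $\eta(x):=-x\log x$. *)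

theory Defs
  imports "HOL-Probability.Probability"
begin

text \<open>A wire-tap code of size M is given by \<open>Q :: nat \<Rightarrow> 'x pmf\<close> and
  \<open>D :: nat \<Rightarrow> 'y set\<close>, indices \<open>i < M\<close>; natural logarithms.\<close>

definition out_dist :: "('x \<Rightarrow> 'y pmf) \<Rightarrow> 'x pmf \<Rightarrow> 'y pmf" where
  "out_dist W Q = bind_pmf Q W"

definition is_wiretap_code :: "nat \<Rightarrow> (nat \<Rightarrow> 'x pmf) \<Rightarrow> (nat \<Rightarrow> 'y set) \<Rightarrow> bool" where
  "is_wiretap_code M Q D \<longleftrightarrow> disjoint_family_on D {..<M}"

definition eps_B :: "('x \<Rightarrow> 'y pmf) \<Rightarrow> nat \<Rightarrow> (nat \<Rightarrow> 'x pmf) \<Rightarrow> (nat \<Rightarrow> 'y set) \<Rightarrow> real" where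
  "eps_B WB M Q D = (\<Sum>i<M. measure_pmf.prob (out_dist WB (Q i)) (- D i)) / real M"

definition KL_div :: "('z::finite \<Rightarrow> real) \<Rightarrow> ('z \<Rightarrow> real) \<Rightarrow> real" where
  "KL_div q r = (\<Sum>z\<in>UNIV. if q z = 0 then 0 else q z * ln (q z / r z))"

definition l1_dist :: "('z::finite \<Rightarrow> real) \<Rightarrow> ('z \<Rightarrow> real) \<Rightarrow> real" where
  "l1_dist q r = (\<Sum>z\<in>UNIV. \<bar>q z - r z\<bar>)"

definition code_out_mix :: "('x \<Rightarrow> 'z pmf) \<Rightarrow> nat \<Rightarrow> (nat \<Rightarrow> 'x pmf) \<Rightarrow> 'z \<Rightarrow> real" where
  "code_out_mix WE M Q = (\<lambda>z. (\<Sum>i<M. pmf (out_dist WE (Q i)) z) / real M)"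

definition I_E :: "('x \<Rightarrow> 'z::finite pmf) \<Rightarrow> nat \<Rightarrow> (nat \<Rightarrow> 'x pmf) \<Rightarrow> real" where
  "I_E WE M Q = (\<Sum>i<M. KL_div (pmf (out_dist WE (Q i))) (code_out_mix WE M Q)) / real M"

definition d_E :: "('x \<Rightarrow> 'z::finite pmf) \<Rightarrow> nat \<Rightarrow> (nat \<Rightarrow> 'x pmf) \<Rightarrow> real" where
  "d_E WE M Q = (\<Sum>i<M. \<Sum>j<M. if i \<noteq> j then l1_dist (pmf (out_dist WE (Q i))) (pmf (out_dist WE (Q j))) else 0)
      / (real M * (real M - 1))"

definition delta :: "'x pmf \<Rightarrow> ('x \<Rightarrow> 'z::finite pmf) \<Rightarrow> real \<Rightarrow> real" where
  "delta p W C = measure_pmf.expectation p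
     (\<lambda>x. \<Sum>z\<in>{z. pmf (W x) z > C * pmf (out_dist W p) z}. pmf (W x) z)"

definition delta' :: "'x pmf \<Rightarrow> ('x \<Rightarrow> 'z::finite pmf) \<Rightarrow> real \<Rightarrow> real" where
  "delta' p W C = measure_pmf.expectation p
     (\<lambda>x. \<Sum>z\<in>{z. pmf (W x) z \<le> C * pmf (out_dist W p) z \<and> pmf (out_dist W p) z > 0}.
        (pmf (W x) z)\<^sup>2 / pmf (out_dist W p) z)"

definition phi :: "real \<Rightarrow> ('x \<Rightarrow> 'z::finite pmf) \<Rightarrow> 'x pmf \<Rightarrow> real" where
  "phi t W p = ln (\<Sum>z\<in>UNIV.
     (measure_pmf.expectation p (\<lambda>x. pmf (W x) z powr (1 / (1 + t)))) powr (1 + t))"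

text \<open>\<open>\<Sum>_y (E_p W_x(y)^{1/(1+s)})^{1+s}\<close> over a countable output set, as an
  extended nonnegative real (the series may diverge).\<close>
definition gallager_sum :: "real \<Rightarrow> ('x \<Rightarrow> 'y pmf) \<Rightarrow> 'x pmf \<Rightarrow> ennreal" where
  "gallager_sum s W p = (\<integral>\<^sup>+ y. ennreal
     ((measure_pmf.expectation p (\<lambda>x. pmf (W x) y powr (1 / (1 + s)))) powr (1 + s))
     \<partial>count_space UNIV)"

definition eta :: "real \<Rightarrow> real" where
  "eta x = - x * ln x"

end

(* Random coding.  Draw a codebook of M L codewords i.i.d. from p, split it into M blocks of L,
   send message i through a uniformly chosen codeword of block i, and decode by maximum likelihood
   over all M L codewords.  On average over the codebook, Bob's error is at most the average
   maximum-likelihood error of a random code of size M L, which obeys Gallager's bound and a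
   threshold bound.  Eve sees for message i the average q of L i.i.d. outputs of W^E: I_E and d_E
   are at most the averages of D(q || W^E_p) and 2 |q - W^E_p|_1 (the mixture of the q's being the
   optimal reference), and these are bounded in expectation by splitting W^E at the threshold
   C W^E_p (giving delta and delta'), or via the Renyi divergence of order 1 + s (giving phi).
   Markov's inequality applied to the three averaged quantities at once yields a single codebook
   within a factor 3 of all expectations. *)

theory Submission
  imports Defs
begin

section \<open>Expectations under products of probability mass functions\<close>

lemma integrable_measure_pmf_bounded:
  fixes f :: "'a \<Rightarrow> real"
  assumes "\<And>x. x \<in> set_pmf M \<Longrightarrow> \<bar>f x\<bar> \<le> B"
  shows "integrable (measure_pmf M) f"
  by (rule measure_pmf.integrable_const_bound[where B=B]) (auto simp: AE_measure_pmf_iff assms)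

lemma expectation_bind_pmf_bounded:
  fixes f :: "'b \<Rightarrow> real"
  assumes "\<And>y. y \<in> set_pmf (bind_pmf M N) \<Longrightarrow> \<bar>f y\<bar> \<le> B"
  shows "measure_pmf.expectation (bind_pmf M N) f =
         measure_pmf.expectation M (\<lambda>x. measure_pmf.expectation (N x) f)"
proof -
  define g where "g y = (if y \<in> set_pmf (bind_pmf M N) then f y else 0)" for y
  have g_bounded: "\<bar>g y\<bar> \<le> max B 0" for y
    using assms[of y] by (fastforce simp: g_def)
  have f_eq_g: "measure_pmf.expectation (N x) f = measure_pmf.expectation (N x) g"
    if "x \<in> set_pmf M" for x
    using that by (intro integral_cong_AE) (auto simp: AE_measure_pmf_iff g_def)
  have "measure_pmf.expectation (bind_pmf M N) f = measure_pmf.expectation (bind_pmf M N) g"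
    by (intro integral_cong_AE) (auto simp: AE_measure_pmf_iff g_def)
  also have "\<dots> = measure_pmf.expectation M (\<lambda>x. measure_pmf.expectation (N x) g)"
    unfolding measure_pmf_bind
    by (rule integral_bind[where K="count_space UNIV" and B="max B 0" and B'=1])
       (auto simp: g_bounded measure_pmf.prob_space_axioms prob_space_imp_subprob_space
          intro!: measure_pmf_in_subprob_algebra prob_space.finite_measure measure_pmf.emeasure_le_1)
  also have "\<dots> = measure_pmf.expectation M (\<lambda>x. measure_pmf.expectation (N x) f)"
    by (intro integral_cong_AE) (auto simp: AE_measure_pmf_iff f_eq_g)
  finally show ?thesis .
qed

lemma expectation_pair_pmf_bounded:
  fixes f :: "'a \<times> 'b \<Rightarrow> real"
  assumes "\<And>a b. a \<in> set_pmf A \<Longrightarrow> b \<in> set_pmf B \<Longrightarrow> \<bar>f (a, b)\<bar> \<le> K"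
  shows "measure_pmf.expectation (pair_pmf A B) f =
         measure_pmf.expectation A (\<lambda>a. measure_pmf.expectation B (\<lambda>b. f (a, b)))"
proof -
  have "measure_pmf.expectation (pair_pmf A B) f =
     measure_pmf.expectation A (\<lambda>a. measure_pmf.expectation (bind_pmf B (\<lambda>b. return_pmf (a, b))) f)"
    unfolding pair_pmf_def by (rule expectation_bind_pmf_bounded[where B=K]) (auto simp: assms)
  also have "\<dots> = measure_pmf.expectation A (\<lambda>a. measure_pmf.expectation B (\<lambda>b. f (a, b)))"
  proof (intro integral_cong_AE AE_pmfI)
    fix a assume "a \<in> set_pmf A"
    then show "measure_pmf.expectation (bind_pmf B (\<lambda>b. return_pmf (a, b))) f =
        measure_pmf.expectation B (\<lambda>b. f (a, b))"
      by (subst expectation_bind_pmf_bounded[where B=K]) (auto simp: assms)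
  qed auto
  finally show ?thesis .
qed

lemma Pi_pmf_split:
  assumes "finite I" and "k \<in> I"
  shows "Pi_pmf I d (\<lambda>_. p) =
    map_pmf (\<lambda>(x, g). g(k := x)) (pair_pmf p (Pi_pmf (I - {k}) d (\<lambda>_. p)))"
  using Pi_pmf_insert[of "I - {k}" k d "\<lambda>_. p"] assms by (simp add: insert_absorb)

lemma fun_upd_in_set_Pi_pmf:
  assumes "finite I" and "k \<in> I" and "x \<in> set_pmf p"
    and "g \<in> set_pmf (Pi_pmf (I - {k}) d (\<lambda>_. p))"
  shows "g(k := x) \<in> set_pmf (Pi_pmf I d (\<lambda>_. p))"
  using assms by (subst Pi_pmf_split[OF assms(1,2)]) force

lemma expectation_Pi_pmf_split:
  fixes F :: "('i \<Rightarrow> 'a) \<Rightarrow> real"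
  assumes I: "finite I" and k: "k \<in> I"
    and bounded: "\<And>g. g \<in> set_pmf (Pi_pmf I d (\<lambda>_. p)) \<Longrightarrow> \<bar>F g\<bar> \<le> K"
  shows "measure_pmf.expectation (Pi_pmf I d (\<lambda>_. p)) F =
    measure_pmf.expectation p
      (\<lambda>x. measure_pmf.expectation (Pi_pmf (I - {k}) d (\<lambda>_. p)) (\<lambda>g. F (g(k := x))))"
proof -
  have "measure_pmf.expectation (Pi_pmf I d (\<lambda>_. p)) F =
      measure_pmf.expectation (pair_pmf p (Pi_pmf (I - {k}) d (\<lambda>_. p))) (\<lambda>(x, g). F (g(k := x)))"
    by (subst Pi_pmf_split[OF I k]) (simp add: case_prod_unfold)
  also have "\<dots> = measure_pmf.expectation p
      (\<lambda>x. measure_pmf.expectation (Pi_pmf (I - {k}) d (\<lambda>_. p)) (\<lambda>g. F (g(k := x))))"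
    by (subst expectation_pair_pmf_bounded[where K=K])
       (auto intro: bounded fun_upd_in_set_Pi_pmf[OF I k])
  finally show ?thesis .
qed

lemma nn_integral_Pi_pmf_split:
  assumes "finite I" and "k \<in> I"
  shows "(\<integral>\<^sup>+g. F g \<partial>Pi_pmf I d (\<lambda>_. p)) =
     (\<integral>\<^sup>+x. (\<integral>\<^sup>+g. F (g(k := x)) \<partial>Pi_pmf (I - {k}) d (\<lambda>_. p)) \<partial>p)"
  by (subst Pi_pmf_split[OF assms]) (simp add: nn_integral_pair_pmf' case_prod_unfold)

lemma map_Pi_pmf_component:
  "finite I \<Longrightarrow> j \<in> I \<Longrightarrow> map_pmf (\<lambda>g. g j) (Pi_pmf I d (\<lambda>_. p)) = p"
  by (simp add: Pi_pmf_component)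

lemma expectation_Pi_pmf_component:
  fixes h :: "'a \<Rightarrow> real"
  assumes "finite I" and "j \<in> I"
  shows "measure_pmf.expectation (Pi_pmf I d (\<lambda>_. p)) (\<lambda>g. h (g j)) = measure_pmf.expectation p h"
  using integral_map_pmf[of "\<lambda>g. g j" "Pi_pmf I d (\<lambda>_. p)" h]
  by (simp add: map_Pi_pmf_component[OF assms])

lemma nn_integral_Pi_pmf_component:
  assumes "finite I" and "j \<in> I"
  shows "(\<integral>\<^sup>+g. F (g j) \<partial>Pi_pmf I d (\<lambda>_. p)) = (\<integral>\<^sup>+x. F x \<partial>p)"
proof -
  have "(\<integral>\<^sup>+g. F (g j) \<partial>Pi_pmf I d (\<lambda>_. p)) = (\<integral>\<^sup>+x. F x \<partial>map_pmf (\<lambda>g. g j) (Pi_pmf I d (\<lambda>_. p)))"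
    by simp
  then show ?thesis by (simp add: map_Pi_pmf_component[OF assms])
qed

lemma set_Pi_pmf_component:
  assumes "finite I" and "j \<in> I" and "g \<in> set_pmf (Pi_pmf I d (\<lambda>_. p))"
  shows "g j \<in> set_pmf p"
  using assms(3) set_map_pmf[of "\<lambda>g. g j" "Pi_pmf I d (\<lambda>_. p)"]
  by (auto simp: map_Pi_pmf_component[OF assms(1,2)])

lemma expectation_Pi_pmf_mult_indep:
  fixes u v :: "'a \<Rightarrow> real"
  assumes I: "finite I" and j: "j \<in> I" and k: "k \<in> I" and "j \<noteq> k"
    and u: "\<And>x. \<bar>u x\<bar> \<le> Bu" and v: "\<And>x. \<bar>v x\<bar> \<le> Bv"
  shows "measure_pmf.expectation (Pi_pmf I d (\<lambda>_. p)) (\<lambda>g. u (g j) * v (g k)) =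
     measure_pmf.expectation p u * measure_pmf.expectation p v"
proof -
  have "\<bar>u (g j) * v (g k)\<bar> \<le> Bu * Bv" for g
    unfolding abs_mult by (intro mult_mono u v) (use u[of "g j"] in auto)
  then have "measure_pmf.expectation (Pi_pmf I d (\<lambda>_. p)) (\<lambda>g. u (g j) * v (g k)) =
     measure_pmf.expectation p (\<lambda>x. measure_pmf.expectation (Pi_pmf (I - {j}) d (\<lambda>_. p))
       (\<lambda>g. u x * v (g k)))"
    using \<open>j \<noteq> k\<close> by (subst expectation_Pi_pmf_split[OF I j, where K="Bu * Bv"]) auto
  also have "\<dots> = measure_pmf.expectation p u * measure_pmf.expectation p v"
    using I k \<open>j \<noteq> k\<close> by (subst expectation_Pi_pmf_component) auto
  finally show ?thesis .
qed

lemma nn_integral_swap_pmf: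
  fixes A :: "'a pmf" and B :: "'b pmf"
  shows "(\<integral>\<^sup>+a. (\<integral>\<^sup>+b. f a b \<partial>B) \<partial>A) = (\<integral>\<^sup>+b. (\<integral>\<^sup>+a. f a b \<partial>A) \<partial>B)"
proof -
  have "(\<integral>\<^sup>+a. (\<integral>\<^sup>+b. f a b \<partial>B) \<partial>A) = (\<integral>\<^sup>+x. (\<lambda>(a, b). f a b) x \<partial>pair_pmf A B)"
    by (simp add: nn_integral_pair_pmf')
  also have "\<dots> = (\<integral>\<^sup>+x. (\<lambda>(b, a). f a b) x \<partial>pair_pmf B A)"
    by (subst pair_commute_pmf) (simp add: case_prod_unfold)
  also have "\<dots> = (\<integral>\<^sup>+b. (\<integral>\<^sup>+a. f a b \<partial>A) \<partial>B)"
    by (simp add: nn_integral_pair_pmf')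
  finally show ?thesis .
qed

lemma nn_integral_swap_pmf_count_space:
  fixes A :: "'a pmf"
  shows "(\<integral>\<^sup>+a. (\<integral>\<^sup>+b. f a b \<partial>count_space UNIV) \<partial>A) =
   (\<integral>\<^sup>+b. (\<integral>\<^sup>+a. f a b \<partial>A) \<partial>count_space UNIV)"
proof -
  have "(\<integral>\<^sup>+a. (\<integral>\<^sup>+b. f a b \<partial>count_space UNIV) \<partial>A) =
     (\<integral>\<^sup>+a. (\<integral>\<^sup>+b. ennreal (pmf A a) * f a b \<partial>count_space UNIV) \<partial>count_space UNIV)"
    by (simp add: nn_integral_measure_pmf nn_integral_cmult)
  also have "\<dots> = (\<integral>\<^sup>+b. (\<integral>\<^sup>+a. ennreal (pmf A a) * f a b \<partial>count_space UNIV) \<partial>count_space UNIV)"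
    using nn_integral_fst_count_space[of "\<lambda>(a, b). ennreal (pmf A a) * f a b"]
      nn_integral_snd_count_space[of "\<lambda>(a, b). ennreal (pmf A a) * f a b"] by simp
  also have "\<dots> = (\<integral>\<^sup>+b. (\<integral>\<^sup>+a. f a b \<partial>A) \<partial>count_space UNIV)"
    by (simp add: nn_integral_measure_pmf)
  finally show ?thesis .
qed

lemma measure_bind_pmf_eq_expectation:
  "measure_pmf.prob (bind_pmf p W) S = measure_pmf.expectation p (\<lambda>x. measure_pmf.prob (W x) S)"
proof -
  have "ennreal (measure_pmf.prob (bind_pmf p W) S) = (\<integral>\<^sup>+x. ennreal (measure_pmf.prob (W x) S) \<partial>p)"
    by (simp add: measure_pmf.emeasure_eq_measure[symmetric])
  also have "\<dots> = ennreal (measure_pmf.expectation p (\<lambda>x. measure_pmf.prob (W x) S))"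
    by (rule nn_integral_eq_integral) (auto intro!: integrable_measure_pmf_bounded[where B=1])
  finally show ?thesis by (simp add: integral_nonneg_AE)
qed

lemma expectation_pos_pmf:
  fixes f :: "'a \<Rightarrow> real"
  assumes int: "integrable (measure_pmf P) f" and pos: "\<And>x. x \<in> set_pmf P \<Longrightarrow> f x > 0"
  shows "measure_pmf.expectation P f > 0"
proof -
  have "measure_pmf.expectation P f \<ge> 0"
    by (intro integral_nonneg_AE AE_pmfI) (auto dest: pos intro: less_imp_le)
  moreover obtain x where x: "x \<in> set_pmf P"
    using set_pmf_not_empty[of P] by blast
  have "measure_pmf.expectation P f \<noteq> 0"
  proof
    assume "measure_pmf.expectation P f = 0"
    then have "AE x in P. f x = 0"
      using integral_nonneg_eq_0_iff_AE[OF int] pos by (auto simp: AE_measure_pmf_iff intro: less_imp_le)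
    then show False using x pos[OF x] by (auto simp: AE_measure_pmf_iff)
  qed
  ultimately show ?thesis by simp
qed

lemma expectation_eq_0_pmfD:
  fixes f :: "'a \<Rightarrow> real"
  assumes "integrable (measure_pmf P) f" and "\<And>x. x \<in> set_pmf P \<Longrightarrow> f x \<ge> 0"
    and "measure_pmf.expectation P f = 0" and "x \<in> set_pmf P"
  shows "f x = 0"
  using integral_nonneg_eq_0_iff_AE[OF assms(1)] assms(2-4) by (auto simp: AE_measure_pmf_iff)

lemma ex_set_pmf_le_expectation:
  fixes f :: "'a \<Rightarrow> real"
  assumes "integrable (measure_pmf P) f"
  shows "\<exists>w\<in>set_pmf P. f w \<le> measure_pmf.expectation P f"
proof (rule ccontr)
  assume "\<not> ?thesis"
  then have "measure_pmf.expectation P (\<lambda>w. f w - measure_pmf.expectation P f) > 0"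
    using assms by (intro expectation_pos_pmf) auto
  then show False using assms by (simp add: Bochner_Integration.integral_diff)
qed

text \<open>Markov's inequality for several random variables at once: some outcome is simultaneously
  good for all of them, at the price of the factor \<open>card I\<close>.\<close>

lemma ex_set_pmf_le_card_mult_expectations:
  fixes X :: "'i \<Rightarrow> 'a \<Rightarrow> real"
  assumes I: "finite I"
    and int: "\<And>i. i \<in> I \<Longrightarrow> integrable (measure_pmf P) (X i)"
    and nonneg: "\<And>i w. i \<in> I \<Longrightarrow> w \<in> set_pmf P \<Longrightarrow> X i w \<ge> 0"
  shows "\<exists>w\<in>set_pmf P. \<forall>i\<in>I. X i w \<le> real (card I) * measure_pmf.expectation P (X i)"
proof -
  define m where "m i = measure_pmf.expectation P (X i)" for i
  have m_nonneg: "m i \<ge> 0" if "i \<in> I" for i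
    unfolding m_def using that by (intro integral_nonneg_AE AE_pmfI nonneg)
  define T where "T w = (\<Sum>i\<in>I. X i w / m i)" for w
  have "integrable (measure_pmf P) T"
    unfolding T_def using int by auto
  then obtain w where w: "w \<in> set_pmf P" and "T w \<le> measure_pmf.expectation P T"
    using ex_set_pmf_le_expectation by blast
  note \<open>T w \<le> measure_pmf.expectation P T\<close>
  also have "measure_pmf.expectation P T = (\<Sum>i\<in>I. m i / m i)"
    unfolding T_def m_def using int by (simp add: Bochner_Integration.integral_sum)
  also have "\<dots> \<le> (\<Sum>i\<in>I. 1)"
    by (intro sum_mono) simp
  finally have T_le: "T w \<le> real (card I)" by simp
  have "X i w \<le> real (card I) * m i" if i: "i \<in> I" for i
  proof (cases "m i = 0")
    case True
    then show ?thesis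
      using expectation_eq_0_pmfD[OF int[OF i] _ _ w] nonneg i by (simp add: m_def)
  next
    case False
    with m_nonneg[OF i] have "m i > 0" by simp
    have "X i w / m i \<le> T w"
      unfolding T_def using I i w nonneg m_nonneg by (intro member_le_sum divide_nonneg_nonneg) auto
    with T_le \<open>m i > 0\<close> have "X i w / m i \<le> real (card I)" by linarith
    with \<open>m i > 0\<close> show ?thesis by (simp add: field_simps)
  qed
  with w show ?thesis unfolding m_def by blast
qed

section \<open>Elementary inequalities and Jensen-type bounds\<close>

lemma mult_abs_ln_le_one:
  fixes q :: real
  assumes "0 \<le> q" and "q \<le> 1"
  shows "q * \<bar>ln q\<bar> \<le> 1"
proof (cases "q = 0")
  case False
  with assms have q: "q > 0" by simp
  have "ln (1 / q) \<le> 1 / q - 1"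
    using q by (intro ln_le_minus_one) simp
  moreover have "\<bar>ln q\<bar> = ln (1 / q)"
    using q assms by (simp add: ln_div)
  ultimately have "q * \<bar>ln q\<bar> \<le> q * (1 / q - 1)"
    using q by (intro mult_left_mono) auto
  also have "\<dots> \<le> 1"
    using q by (simp add: field_simps)
  finally show ?thesis .
qed simp

lemma ln_le_tangent:
  fixes y m :: real
  assumes "y > 0" and "m > 0"
  shows "ln y \<le> ln m + y / m - 1"
  using ln_le_minus_one[of "y / m"] assms by (simp add: ln_div)

lemma powr_le_tangent:
  fixes y m s :: real
  assumes "0 \<le> y" and "m > 0" and "0 < s" and "s < 1"
  shows "y powr s \<le> (s * y + (1 - s) * m) / m powr (1 - s)"
proof (cases "y = 0")
  case False
  with assms have "y powr s * m powr (1 - s) \<le> s * y + (1 - s) * m"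
    using Youngs_inequality_0[of s "1 - s" y m] by simp
  with assms show ?thesis by (simp add: field_simps)
qed (use assms in simp)

lemma powr_interpolation_le:
  fixes a A B s :: real
  assumes a: "a \<ge> 0" and A: "A > 0" and B: "B > 0" and s: "0 < s" "s < 1"
  shows "a powr (1 + s) / (A powr s * B powr (1 - s)) \<le> s * (a / A) + (1 - s) * (a powr (1 / (1 - s)) / B)"
proof (cases "a = 0")
  case False
  with a have a: "a > 0" by simp
  have "(a powr (1 / (1 - s))) powr (1 - s) = a"
    using s a by (simp add: powr_powr)
  then have "(a / A) powr s * (a powr (1 / (1 - s)) / B) powr (1 - s) = a powr (1 + s) / (A powr s * B powr (1 - s))"
    using a A B by (simp add: powr_divide powr_add field_simps)
  moreover have "(a / A) powr s * (a powr (1 / (1 - s)) / B) powr (1 - s)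
        \<le> s * (a / A) + (1 - s) * (a powr (1 / (1 - s)) / B)"
    using Youngs_inequality_0[of s "1 - s" "a / A" "a powr (1 / (1 - s)) / B"] s a A B by simp
  ultimately show ?thesis by simp
qed (use A B in simp)

lemma abs_ln_le_of_between:
  fixes y lo hi :: real
  assumes "0 < lo" and "lo \<le> y" and "y \<le> hi"
  shows "\<bar>ln y\<bar> \<le> \<bar>ln lo\<bar> + \<bar>ln hi\<bar>"
proof -
  have "ln lo \<le> ln y" and "ln y \<le> ln hi"
    using assms by auto
  then show ?thesis by linarith
qed

lemma powr_ge_self:
  fixes t s :: real
  assumes "0 \<le> t" and "t \<le> 1" and "0 \<le> s" and "s \<le> 1"
  shows "t \<le> t powr s"
  using powr_mono'[of s 1 t] assms by (cases "t = 0") auto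

lemma powr_add_le_add_powr:
  fixes a b s :: real
  assumes a: "0 \<le> a" and b: "0 \<le> b" and s: "0 \<le> s" "s \<le> 1"
  shows "(a + b) powr s \<le> a powr s + b powr s"
proof (cases "a + b = 0")
  case True
  then show ?thesis using a b by simp
next
  case False
  define c where "c = a + b"
  have c: "c > 0" using False a b by (simp add: c_def)
  have "a / c \<le> (a / c) powr s" and "b / c \<le> (b / c) powr s"
    using a b c s by (intro powr_ge_self; simp add: c_def field_simps)+
  then have "c powr s * (a / c + b / c) \<le> c powr s * ((a / c) powr s + (b / c) powr s)"
    by (intro mult_left_mono) auto
  also have "\<dots> = a powr s + b powr s"
    using a b c by (simp add: powr_mult[symmetric] distrib_left)
  finally show ?thesis
    using c by (simp add: c_def add_divide_distrib[symmetric])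
qed

lemma min_one_le_powr:
  fixes v s :: real
  assumes "v \<ge> 0" and "0 \<le> s" and "s \<le> 1"
  shows "min 1 v \<le> v powr s"
  using powr_ge_self[of v s] ge_one_powr_ge_zero[of v s] assms by (cases "v \<le> 1") auto

lemma abs_le_quadratic_tangent:
  fixes y c :: real
  assumes "c > 0"
  shows "\<bar>y\<bar> \<le> y\<^sup>2 / (2 * c) + c / 2"
proof -
  have "2 * c * \<bar>y\<bar> \<le> y\<^sup>2 + c\<^sup>2"
    using sum_squares_ge_zero[of "\<bar>y\<bar> - c" 0] by (simp add: power2_eq_square algebra_simps)
  then show ?thesis
    using assms by (simp add: field_simps power2_eq_square)
qed

lemma le_sqrt_of_tangent_bounds:
  fixes X D :: real
  assumes D: "D \<ge> 0" and tangent: "\<And>c. c > 0 \<Longrightarrow> X \<le> D / (2 * c) + c / 2"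
  shows "X \<le> sqrt D"
proof (cases "D = 0")
  case True
  show ?thesis
  proof (rule ccontr)
    assume "\<not> X \<le> sqrt D"
    with True have "X > 0" by simp
    then have "X \<le> D / (2 * X) + X / 2" by (rule tangent)
    with True \<open>X > 0\<close> show False by simp
  qed
next
  case False
  with D have "sqrt D > 0" by simp
  then have "X \<le> D / (2 * sqrt D) + sqrt D / 2" by (rule tangent)
  also have "D / (2 * sqrt D) = sqrt D / 2"
    using D \<open>sqrt D > 0\<close> by (simp add: field_simps flip: real_sqrt_mult) 
  finally show ?thesis by simp
qed

lemma eta_le_tangent:
  fixes b c n :: real
  assumes b: "b \<ge> 0" and c: "c > 0" and n: "n > 0"
  shows "eta b \<le> - b * ln c + b * ln n + c / n - b"
proof (cases "b = 0")
  case True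
  then show ?thesis using c n by (simp add: eta_def)
next
  case False
  with b have b: "b > 0" by simp
  have "b * ln (c / (n * b)) \<le> b * (c / (n * b) - 1)"
    using b c n by (intro mult_left_mono ln_le_minus_one) auto
  moreover have "ln (c / (n * b)) = ln c - ln n - ln b"
    using b c n by (simp add: ln_div ln_mult)
  moreover have "b * (c / (n * b) - 1) = c / n - b"
    using b n by (simp add: field_simps)
  ultimately have "b * (ln c - ln n - ln b) \<le> c / n - b"
    by simp
  then show ?thesis
    unfolding eta_def by (simp add: algebra_simps)
qed

lemma sum_eta_le:
  fixes b :: "'a \<Rightarrow> real"
  assumes S: "finite S" "S \<noteq> {}" and b: "\<And>z. z \<in> S \<Longrightarrow> b z \<ge> 0"
  shows "(\<Sum>z\<in>S. eta (b z)) \<le> eta (\<Sum>z\<in>S. b z) + (\<Sum>z\<in>S. b z) * ln (real (card S))"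
proof -
  define c where "c = (\<Sum>z\<in>S. b z)"
  define n where "n = real (card S)"
  have n: "n > 0"
    using S by (simp add: n_def card_gt_0_iff)
  show ?thesis
  proof (cases "c = 0")
    case True
    then have "\<forall>z\<in>S. b z = 0"
      using sum_nonneg_eq_0_iff[OF S(1)] b unfolding c_def by blast
    then show ?thesis by (simp add: eta_def)
  next
    case False
    then have c: "c > 0"
      unfolding c_def using sum_nonneg[of S b] b by force
    have "(\<Sum>z\<in>S. eta (b z)) \<le> (\<Sum>z\<in>S. - b z * ln c + b z * ln n + c / n - b z)"
      by (intro sum_mono eta_le_tangent b c n)
    also have "\<dots> = eta c + c * ln n"
      using n by (simp add: sum.distrib sum_subtractf sum_distrib_right[symmetric] c_def n_def eta_def)
    finally show ?thesis unfolding c_def n_def .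
  qed
qed

lemma mult_ln_inverse_le_eta:
  fixes b r :: real
  assumes "0 \<le> b" and "b \<le> r"
  shows "b * ln (1 / r) \<le> eta b"
proof (cases "b = 0")
  case True
  then show ?thesis by (simp add: eta_def)
next
  case False
  with assms have "b > 0" by simp
  with assms have "b * ln (1 / r) \<le> b * ln (1 / b)"
    by (intro mult_left_mono ln_mono) (auto simp: field_simps)
  also have "\<dots> = eta b"
    using \<open>b > 0\<close> by (simp add: eta_def ln_div)
  finally show ?thesis .
qed

lemma expectation_ln_le_ln_expectation:
  fixes f :: "'a \<Rightarrow> real"
  assumes a: "a > 0"
    and lower: "\<And>x. x \<in> set_pmf M \<Longrightarrow> a \<le> f x" and upper: "\<And>x. x \<in> set_pmf M \<Longrightarrow> f x \<le> b"
  shows "measure_pmf.expectation M (\<lambda>x. ln (f x)) \<le> ln (measure_pmf.expectation M f)"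
proof -
  define m where "m = measure_pmf.expectation M f"
  have int_f: "integrable (measure_pmf M) f"
    by (rule integrable_measure_pmf_bounded[where B=b]) (use a lower upper in force)
  have int_ln: "integrable (measure_pmf M) (\<lambda>x. ln (f x))"
    by (rule integrable_measure_pmf_bounded) (use a lower upper in \<open>blast intro: abs_ln_le_of_between\<close>)
  have "measure_pmf.expectation M (\<lambda>_. a) \<le> m"
    unfolding m_def using int_f lower by (intro integral_mono_AE AE_pmfI) auto
  with a have m: "m > 0" by simp
  have "measure_pmf.expectation M (\<lambda>x. ln (f x)) \<le> measure_pmf.expectation M (\<lambda>x. ln m + f x / m - 1)"
    using int_ln int_f a lower m
    by (intro integral_mono_AE AE_pmfI ln_le_tangent) (auto intro: less_le_trans)
  also have "\<dots> = ln m"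
    using int_f m by (simp add: m_def)
  finally show ?thesis unfolding m_def .
qed

lemma expectation_powr_le_powr_expectation:
  fixes Y :: "'a \<Rightarrow> real"
  assumes nonneg: "\<And>x. x \<in> set_pmf M \<Longrightarrow> Y x \<ge> 0" and upper: "\<And>x. x \<in> set_pmf M \<Longrightarrow> Y x \<le> B"
    and s: "0 < s" "s < 1"
  shows "measure_pmf.expectation M (\<lambda>x. Y x powr s) \<le> (measure_pmf.expectation M Y) powr s"
proof -
  define m where "m = measure_pmf.expectation M Y"
  have int_Y: "integrable (measure_pmf M) Y"
    by (rule integrable_measure_pmf_bounded[where B=B]) (use nonneg upper in force)
  have int_powr: "integrable (measure_pmf M) (\<lambda>x. Y x powr s)"
  proof (rule integrable_measure_pmf_bounded[where B="max B 0 powr s"])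
    fix x assume x: "x \<in> set_pmf M"
    have "Y x powr s \<le> max B 0 powr s"
      using nonneg[OF x] upper[OF x] s by (intro powr_mono2) auto
    then show "\<bar>Y x powr s\<bar> \<le> max B 0 powr s" by simp
  qed
  have "m \<ge> 0"
    unfolding m_def by (intro integral_nonneg_AE AE_pmfI nonneg)
  show ?thesis
  proof (cases "m = 0")
    case True
    then have "measure_pmf.expectation M (\<lambda>x. Y x powr s) = measure_pmf.expectation M (\<lambda>x. 0)"
      using expectation_eq_0_pmfD[OF int_Y nonneg] unfolding m_def
      by (intro integral_cong_AE) (auto simp: AE_measure_pmf_iff)
    then show ?thesis by (simp add: m_def[symmetric] True)
  next
    case False
    with \<open>m \<ge> 0\<close> have m: "m > 0" by simp
    have "measure_pmf.expectation M (\<lambda>x. Y x powr s) \<le>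
          measure_pmf.expectation M (\<lambda>x. (s * Y x + (1 - s) * m) / m powr (1 - s))"
      using int_powr int_Y nonneg m s by (intro integral_mono_AE AE_pmfI powr_le_tangent) auto
    also have "\<dots> = m powr s"
      using int_Y m by (simp add: m_def field_simps powr_diff)
    finally show ?thesis unfolding m_def .
  qed
qed

text \<open>A form of Hoelder's inequality, proved pointwise by Young's inequality after normalising
  \<open>a\<close> and \<open>a powr (1 / (1 - s))\<close> by their expectations.\<close>

lemma expectation_powr_interpolation:
  fixes a :: "'a \<Rightarrow> real"
  assumes nonneg: "\<And>x. x \<in> set_pmf M \<Longrightarrow> a x \<ge> 0" and le1: "\<And>x. x \<in> set_pmf M \<Longrightarrow> a x \<le> 1"
    and s: "0 < s" "s < 1"
  shows "measure_pmf.expectation M (\<lambda>x. a x powr (1 + s)) * (measure_pmf.expectation M a) powr (- s)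
     \<le> (measure_pmf.expectation M (\<lambda>x. a x powr (1 / (1 - s)))) powr (1 - s)"
proof -
  define A where "A = measure_pmf.expectation M a"
  define B where "B = measure_pmf.expectation M (\<lambda>x. a x powr (1 / (1 - s)))"
  define E where "E = measure_pmf.expectation M (\<lambda>x. a x powr (1 + s))"
  have int: "integrable (measure_pmf M) (\<lambda>x. a x powr e)" if "e > 0" for e
    by (rule integrable_measure_pmf_bounded[where B=1]) (use nonneg le1 that in \<open>auto intro!: powr_le1\<close>)
  have int_a: "integrable (measure_pmf M) a"
    using int[of 1] by (rule integrable_cong_AE_imp) (auto simp: AE_measure_pmf_iff nonneg)
  have int_B: "integrable (measure_pmf M) (\<lambda>x. a x powr (1 / (1 - s)))"
    using int s by simp
  have A_nonneg: "A \<ge> 0" and B_nonneg: "B \<ge> 0"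
    unfolding A_def B_def by (auto intro!: integral_nonneg_AE AE_pmfI nonneg)
  show ?thesis
  proof (cases "A = 0")
    case True
    then show ?thesis using B_nonneg by (simp add: A_def[symmetric] B_def[symmetric])
  next
    case False
    with A_nonneg have A: "A > 0" by simp
    have B: "B > 0"
    proof (rule ccontr)
      assume "\<not> B > 0"
      with B_nonneg have "B = 0" by simp
      then have "a x powr (1 / (1 - s)) = 0" if "x \<in> set_pmf M" for x
        using expectation_eq_0_pmfD[OF int_B _ _ that] B_def by auto
      then have "a x = 0" if "x \<in> set_pmf M" for x
        using that by simp
      then have "A = measure_pmf.expectation M (\<lambda>x. 0)"
        unfolding A_def by (intro integral_cong_AE) (auto simp: AE_measure_pmf_iff)
      with A show False by simp
    qed
    define K where "K = A powr s * B powr (1 - s)"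
    have K: "K > 0" using A B by (simp add: K_def)
    have young: "a x powr (1 + s) / K \<le> s * (a x / A) + (1 - s) * (a x powr (1 / (1 - s)) / B)"
      if "x \<in> set_pmf M" for x
      unfolding K_def using nonneg[OF that] A B s by (rule powr_interpolation_le)
    have "E / K = measure_pmf.expectation M (\<lambda>x. a x powr (1 + s) / K)"
      unfolding E_def by simp
    also have "\<dots> \<le> measure_pmf.expectation M (\<lambda>x. s * (a x / A) + (1 - s) * (a x powr (1 / (1 - s)) / B))"
      using int[of "1 + s"] int_a int_B s by (intro integral_mono_AE AE_pmfI young) auto
    also have "\<dots> = 1"
      using int_a int_B A B by (simp add: A_def B_def)
    finally have "E \<le> K" using K by (simp add: field_simps)
    then have "E * A powr (- s) \<le> K * A powr (- s)" by (intro mult_right_mono) auto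
    also have "K * A powr (- s) = B powr (1 - s)"
      using A by (simp add: K_def powr_minus field_simps)
    finally show ?thesis by (simp add: E_def A_def B_def)
  qed
qed

section \<open>Divergence inequalities\<close>

lemma KL_div_nonneg:
  fixes q r :: "'z::finite \<Rightarrow> real"
  assumes q_nonneg: "\<And>z. q z \<ge> 0" and q_sum: "(\<Sum>z\<in>UNIV. q z) = 1"
    and r_nonneg: "\<And>z. r z \<ge> 0" and r_sum: "(\<Sum>z\<in>UNIV. r z) \<le> 1"
    and support: "\<And>z. q z > 0 \<Longrightarrow> r z > 0"
  shows "KL_div q r \<ge> 0"
proof -
  have term_ge: "q z - r z \<le> (if q z = 0 then 0 else q z * ln (q z / r z))" for z
  proof (cases "q z = 0")
    case True
    then show ?thesis using r_nonneg[of z] by simp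
  next
    case False
    with q_nonneg[of z] have q: "q z > 0" by simp
    with support have r: "r z > 0" by blast
    have "q z * (1 - r z / q z) \<le> q z * ln (q z / r z)"
      using ln_le_minus_one[of "r z / q z"] q r by (intro mult_left_mono) (auto simp: ln_div)
    moreover have "q z * (1 - r z / q z) = q z - r z"
      using q by (simp add: field_simps)
    ultimately show ?thesis using q by simp
  qed
  have "0 \<le> (\<Sum>z\<in>UNIV. q z - r z)"
    using q_sum r_sum by (simp add: sum_subtractf)
  also have "\<dots> \<le> KL_div q r"
    unfolding KL_div_def by (intro sum_mono term_ge)
  finally show ?thesis .
qed

lemma renyi_sum_pos:
  fixes q r :: "'z::finite \<Rightarrow> real"
  assumes q_nonneg: "\<And>z. q z \<ge> 0" and q_sum: "(\<Sum>z\<in>UNIV. q z) = 1"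
    and r_nonneg: "\<And>z. r z \<ge> 0" and support: "\<And>z. q z > 0 \<Longrightarrow> r z > 0"
  shows "(\<Sum>z\<in>UNIV. q z powr (1 + s) * r z powr (- s)) > 0"
proof -
  obtain z0 where z0: "q z0 > 0"
  proof (rule ccontr)
    assume "\<not> thesis"
    with that have no_pos: "\<not> q z > 0" for z by blast
    have "q z = 0" for z
      using no_pos[of z] q_nonneg[of z] by linarith
    with q_sum show False by simp
  qed
  have "0 < q z0 powr (1 + s) * r z0 powr (- s)"
    using z0 support[OF z0] by simp
  also have "\<dots> \<le> (\<Sum>z\<in>UNIV. q z powr (1 + s) * r z powr (- s))"
    by (rule member_le_sum) auto
  finally show ?thesis .
qed

lemma KL_div_le_ln_renyi_sum:
  fixes q r :: "'z::finite \<Rightarrow> real"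
  assumes q_nonneg: "\<And>z. q z \<ge> 0" and q_sum: "(\<Sum>z\<in>UNIV. q z) = 1"
    and r_nonneg: "\<And>z. r z \<ge> 0" and support: "\<And>z. q z > 0 \<Longrightarrow> r z > 0" and s: "s > 0"
  shows "s * KL_div q r \<le> ln (\<Sum>z\<in>UNIV. q z powr (1 + s) * r z powr (- s))"
proof -
  define X where "X = (\<Sum>z\<in>UNIV. q z powr (1 + s) * r z powr (- s))"
  have X: "X > 0"
    unfolding X_def using renyi_sum_pos assms by blast
  have term_le: "s * (if q z = 0 then 0 else q z * ln (q z / r z)) \<le>
        q z * ln X + q z powr (1 + s) * r z powr (- s) / X - q z" for z
  proof (cases "q z = 0")
    case True
    then show ?thesis by simp
  next
    case False
    with q_nonneg[of z] have q: "q z > 0" by simp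
    with support have r: "r z > 0" by blast
    define u where "u = (q z / r z) powr s"
    have "q z * ln u \<le> q z * (ln X + u / X - 1)"
      using q r X by (intro mult_left_mono ln_le_tangent) (auto simp: u_def)
    moreover have "ln u = s * ln (q z / r z)"
      using q r by (simp add: u_def ln_powr)
    moreover have "q z * u = q z powr (1 + s) * r z powr (- s)"
      using q r by (simp add: u_def powr_divide powr_add powr_minus field_simps)
    ultimately show ?thesis
      using q by (simp add: field_simps)
  qed
  have "s * KL_div q r \<le> (\<Sum>z\<in>UNIV. q z * ln X + q z powr (1 + s) * r z powr (- s) / X - q z)"
    unfolding KL_div_def sum_distrib_left by (intro sum_mono term_le)
  also have "\<dots> = ln X * (\<Sum>z\<in>UNIV. q z) + X / X - (\<Sum>z\<in>UNIV. q z)"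
    by (simp add: sum.distrib sum_subtractf sum_distrib_right[symmetric]
        sum_divide_distrib[symmetric] X_def mult.commute)
  also have "\<dots> = ln X"
    using q_sum X by simp
  finally show ?thesis unfolding X_def .
qed

text \<open>The compensation identity: averaging \<open>D(q\<^sub>i \<parallel> r)\<close> over \<open>i\<close> exceeds the average of
  \<open>D(q\<^sub>i \<parallel> m)\<close>, with \<open>m\<close> the mixture of the \<open>q\<^sub>i\<close>, by exactly \<open>D(m \<parallel> r) \<ge> 0\<close>.\<close>

lemma KL_div_summand_mixture:
  fixes qs :: "nat \<Rightarrow> real" and m r :: real
  assumes M: "M > 0" and q_nonneg: "\<And>i. qs i \<ge> 0" and m_def: "m = (\<Sum>i<M. qs i) / real M"
    and support: "m > 0 \<Longrightarrow> r > 0"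
  shows "(\<Sum>i<M. if qs i = 0 then 0 else qs i * ln (qs i / m)) =
    (\<Sum>i<M. if qs i = 0 then 0 else qs i * ln (qs i / r)) - real M * (if m = 0 then 0 else m * ln (m / r))"
proof (cases "m = 0")
  case True
  with M have "(\<Sum>i<M. qs i) = 0"
    by (simp add: m_def)
  then have "qs i = 0" if "i < M" for i
    using sum_nonneg_eq_0_iff[of "{..<M}" qs] q_nonneg that by auto
  with True show ?thesis by simp
next
  case False
  have "m \<ge> 0"
    unfolding m_def using q_nonneg by (simp add: sum_nonneg)
  with False have m: "m > 0" by simp
  with support have r: "r > 0" by blast
  have "(\<Sum>i<M. if qs i = 0 then 0 else qs i * ln (qs i / m)) =
      (\<Sum>i<M. (if qs i = 0 then 0 else qs i * ln (qs i / r)) - qs i * ln (m / r))"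
  proof (intro sum.cong refl)
    fix i
    show "(if qs i = 0 then 0 else qs i * ln (qs i / m)) =
        (if qs i = 0 then 0 else qs i * ln (qs i / r)) - qs i * ln (m / r)"
    proof (cases "qs i = 0")
      case False
      with q_nonneg[of i] have "qs i > 0" by simp
      with m r show ?thesis by (simp add: ln_div right_diff_distrib)
    qed simp
  qed
  also have "\<dots> = (\<Sum>i<M. if qs i = 0 then 0 else qs i * ln (qs i / r)) - (\<Sum>i<M. qs i) * ln (m / r)"
    by (simp add: sum_subtractf sum_distrib_right)
  also have "(\<Sum>i<M. qs i) = real M * m"
    using M unfolding m_def by simp
  finally show ?thesis using False by simp
qed

lemma sum_KL_div_mixture_le:
  fixes qs :: "nat \<Rightarrow> 'z::finite \<Rightarrow> real" and r :: "'z \<Rightarrow> real"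
  assumes M: "M > 0" and q_nonneg: "\<And>i z. qs i z \<ge> 0" and q_sum: "\<And>i. i < M \<Longrightarrow> (\<Sum>z\<in>UNIV. qs i z) = 1"
    and support: "\<And>i z. i < M \<Longrightarrow> qs i z > 0 \<Longrightarrow> r z > 0"
    and r_nonneg: "\<And>z. r z \<ge> 0" and r_sum: "(\<Sum>z\<in>UNIV. r z) = 1"
  shows "(\<Sum>i<M. KL_div (qs i) (\<lambda>z. (\<Sum>i<M. qs i z) / real M)) \<le> (\<Sum>i<M. KL_div (qs i) r)"
proof -
  define m where "m z = (\<Sum>i<M. qs i z) / real M" for z
  have m_nonneg: "m z \<ge> 0" for z
    unfolding m_def by (intro divide_nonneg_nonneg sum_nonneg q_nonneg) auto
  have "(\<Sum>z\<in>UNIV. m z) = (\<Sum>i<M. \<Sum>z\<in>UNIV. qs i z) / real M"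
    unfolding m_def by (simp add: sum_divide_distrib[symmetric] sum.swap[of _ UNIV])
  also have "\<dots> = 1"
    using M q_sum by simp
  finally have m_sum: "(\<Sum>z\<in>UNIV. m z) = 1" .
  have m_support: "r z > 0" if "m z > 0" for z
  proof -
    from that M have "(\<Sum>i<M. qs i z) > 0"
      unfolding m_def by (simp add: zero_less_divide_iff)
    then obtain i where "i < M" "qs i z > 0"
      using sum_nonpos[of "{..<M}" "\<lambda>i. qs i z"] by (force simp: not_le)
    with support show ?thesis by blast
  qed
  have "(\<Sum>i<M. KL_div (qs i) m) =
      (\<Sum>z\<in>UNIV. (\<Sum>i<M. if qs i z = 0 then 0 else qs i z * ln (qs i z / r z))
         - real M * (if m z = 0 then 0 else m z * ln (m z / r z)))"
    unfolding KL_div_def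
    by (subst sum.swap) (intro sum.cong refl KL_div_summand_mixture[OF M q_nonneg], auto simp: m_def m_support)
  also have "\<dots> = (\<Sum>i<M. KL_div (qs i) r) - real M * KL_div m r"
    unfolding KL_div_def by (simp add: sum_subtractf sum_distrib_left sum.swap[of _ "{..<M}" UNIV])
  finally have "(\<Sum>i<M. KL_div (qs i) m) = (\<Sum>i<M. KL_div (qs i) r) - real M * KL_div m r" .
  moreover have "KL_div m r \<ge> 0"
    by (rule KL_div_nonneg) (use m_nonneg m_sum r_nonneg r_sum m_support in auto)
  ultimately show ?thesis
    unfolding m_def by simp
qed

lemma pairwise_l1_dist_avg_le:
  fixes qs :: "nat \<Rightarrow> 'z::finite \<Rightarrow> real" and r :: "'z \<Rightarrow> real"
  shows "(\<Sum>i<M. \<Sum>j<M. if i \<noteq> j then l1_dist (qs i) (qs j) else 0) / (real M * (real M - 1))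
     \<le> 2 * (\<Sum>i<M. l1_dist (qs i) r) / real M"
proof (cases "M \<le> 1")
  case True
  then have "M = 0 \<or> M = 1" by auto
  then show ?thesis by (auto simp: l1_dist_def intro: sum_nonneg)
next
  case False
  then have M: "real M - 1 > 0" "real M > 0" by auto
  define a where "a i = l1_dist (qs i) r" for i
  have triangle: "l1_dist (qs i) (qs j) \<le> a i + a j" for i j
    unfolding a_def l1_dist_def sum.distrib[symmetric] by (intro sum_mono) arith
  have off_diagonal: "(\<Sum>j<M. if i \<noteq> j then a i + a j else 0) = (\<Sum>j<M. a i + a j) - 2 * a i"
    if "i < M" for i
  proof -
    have "(\<Sum>j<M. a i + a j) = (a i + a i) + (\<Sum>j\<in>{..<M}-{i}. a i + a j)"
      using that by (subst sum.remove[of _ i]) auto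
    moreover have "(\<Sum>j<M. if i \<noteq> j then a i + a j else 0) = (\<Sum>j\<in>{..<M}-{i}. a i + a j)"
      using that by (subst sum.remove[of _ i]) (auto intro!: sum.cong)
    ultimately show ?thesis by simp
  qed
  have "(\<Sum>i<M. \<Sum>j<M. if i \<noteq> j then l1_dist (qs i) (qs j) else 0) \<le>
      (\<Sum>i<M. \<Sum>j<M. if i \<noteq> j then a i + a j else 0)"
    by (intro sum_mono) (auto simp: triangle)
  also have "\<dots> = 2 * (real M - 1) * (\<Sum>i<M. a i)"
    by (simp add: off_diagonal sum.distrib sum_subtractf sum_distrib_left[symmetric]
        sum_distrib_right[symmetric] algebra_simps)
  finally have "(\<Sum>i<M. \<Sum>j<M. if i \<noteq> j then l1_dist (qs i) (qs j) else 0) / (real M * (real M - 1))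
      \<le> 2 * (real M - 1) * (\<Sum>i<M. a i) / (real M * (real M - 1))"
    using M by (intro divide_right_mono) auto
  also have "\<dots> = 2 * (\<Sum>i<M. a i) / real M"
    using M by (simp add: field_simps)
  finally show ?thesis unfolding a_def .
qed

section \<open>The eavesdropper's output for a random block of codewords\<close>

text \<open>A random codebook \<open>g\<close> has i.i.d. entries drawn from \<open>p\<close>; \<open>q g\<close> is the output distribution
  of \<open>W\<close> under the uniform input on the block \<open>g (e 0), \<dots>, g (e (L - 1))\<close>, to be compared with
  the output \<open>r\<close> of \<open>p\<close>.\<close>

locale iid_block =
  fixes W :: "'x \<Rightarrow> 'z::finite pmf" and p :: "'x pmf" and L :: nat and I :: "'i set"
    and e :: "nat \<Rightarrow> 'i" and d :: 'x
  assumes L_pos: "L > 0" and finite_I: "finite I"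
    and inj_e: "inj_on e {..<L}" and e_in_I: "e ` {..<L} \<subseteq> I"
begin

definition r :: "'z \<Rightarrow> real" where
  "r z = pmf (out_dist W p) z"

definition P :: "('i \<Rightarrow> 'x) pmf" where
  "P = Pi_pmf I d (\<lambda>_. p)"

definition P' :: "'i \<Rightarrow> ('i \<Rightarrow> 'x) pmf" where
  "P' k = Pi_pmf (I - {k}) d (\<lambda>_. p)"

definition q :: "('i \<Rightarrow> 'x) \<Rightarrow> 'z \<Rightarrow> real" where
  "q g z = (\<Sum>l<L. pmf (W (g (e l))) z) / real L"

lemma r_eq_expectation: "r z = measure_pmf.expectation p (\<lambda>x. pmf (W x) z)"
  unfolding r_def out_dist_def by (simp add: pmf_bind)

lemma r_nonneg: "r z \<ge> 0"
  by (simp add: r_def)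

lemma r_le_1: "r z \<le> 1"
  by (simp add: r_def pmf_le_1)

lemma sum_r: "(\<Sum>z\<in>UNIV. r z) = 1"
  unfolding r_def by (rule sum_pmf_eq_1) auto

lemma r_pos: "x \<in> set_pmf p \<Longrightarrow> pmf (W x) z > 0 \<Longrightarrow> r z > 0"
  unfolding r_def out_dist_def by (auto simp: pmf_positive_iff set_pmf_iff)

lemma e_neq: "l < L \<Longrightarrow> l' < L \<Longrightarrow> l' \<noteq> l \<Longrightarrow> e l' \<noteq> e l"
  by (simp add: inj_on_eq_iff[OF inj_e])

lemma block_entry_in_set_pmf:
  assumes "g \<in> set_pmf P" and "l < L"
  shows "g (e l) \<in> set_pmf p"
  by (rule set_Pi_pmf_component[OF finite_I _ assms(1)[unfolded P_def]]) (use e_in_I assms(2) in auto)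

lemma q_nonneg: "q g z \<ge> 0"
  unfolding q_def by (intro divide_nonneg_nonneg sum_nonneg) auto

lemma q_le_1: "q g z \<le> 1"
proof -
  have "(\<Sum>l<L. pmf (W (g (e l))) z) \<le> (\<Sum>l<L. 1)"
    by (intro sum_mono) (auto simp: pmf_le_1)
  then show ?thesis
    unfolding q_def using L_pos by (simp add: field_simps)
qed

lemma sum_q: "(\<Sum>z\<in>UNIV. q g z) = 1"
proof -
  have "(\<Sum>z\<in>UNIV. q g z) = (\<Sum>l<L. \<Sum>z\<in>UNIV. pmf (W (g (e l))) z) / real L"
    unfolding q_def by (simp add: sum_divide_distrib[symmetric] sum.swap[of _ UNIV])
  also have "\<dots> = 1"
    using L_pos by (simp add: sum_pmf_eq_1)
  finally show ?thesis .
qed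

lemma q_support: "g \<in> set_pmf P \<Longrightarrow> q g z > 0 \<Longrightarrow> r z > 0"
proof -
  assume g: "g \<in> set_pmf P" and "q g z > 0"
  then have "(\<Sum>l<L. pmf (W (g (e l))) z) > 0"
    using L_pos unfolding q_def by (simp add: zero_less_divide_iff)
  then have "\<not> (\<forall>l<L. pmf (W (g (e l))) z \<le> 0)"
    using sum_nonpos[of "{..<L}" "\<lambda>l. pmf (W (g (e l))) z"] by fastforce
  then obtain l where "l < L" and "pmf (W (g (e l))) z > 0"
    by (auto simp: not_le)
  then show ?thesis
    using r_pos block_entry_in_set_pmf[OF g] by blast
qed

lemma pmf_le_L_mult_q: "l < L \<Longrightarrow> pmf (W (g (e l))) z \<le> real L * q g z"
  unfolding q_def using L_pos by (auto intro!: member_le_sum)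

text \<open>Resampling the \<open>l\<close>-th entry of the block: \<open>q\<close> splits into that entry's contribution and the
  sum over the remaining \<open>L - 1\<close> entries, which is independent of it.\<close>

definition rest :: "nat \<Rightarrow> ('i \<Rightarrow> 'x) \<Rightarrow> 'z \<Rightarrow> real" where
  "rest l g z = (\<Sum>l'\<in>{..<L} - {l}. pmf (W (g (e l'))) z)"

lemma q_fun_upd:
  assumes "l < L"
  shows "q (g(e l := x)) z = (pmf (W x) z + rest l g z) / real L"
proof -
  have "(\<Sum>l'<L. pmf (W ((g(e l := x)) (e l'))) z) =
        pmf (W x) z + (\<Sum>l'\<in>{..<L} - {l}. pmf (W ((g(e l := x)) (e l'))) z)"
    using assms by (subst sum.remove[of _ l]) auto
  also have "(\<Sum>l'\<in>{..<L} - {l}. pmf (W ((g(e l := x)) (e l'))) z) = rest l g z"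
    unfolding rest_def using assms e_neq by (intro sum.cong) auto
  finally show ?thesis unfolding q_def by simp
qed

lemma rest_nonneg: "rest l g z \<ge> 0"
  unfolding rest_def by (intro sum_nonneg) auto

lemma rest_le_L: "l < L \<Longrightarrow> rest l g z \<le> real L"
proof -
  assume "l < L"
  have "rest l g z \<le> (\<Sum>l'\<in>{..<L} - {l}. 1)"
    unfolding rest_def by (intro sum_mono) (auto simp: pmf_le_1)
  also have "\<dots> \<le> real L"
    using card_Diff1_le[of "{..<L}" l] by simp
  finally show ?thesis .
qed

lemma expectation_rest:
  assumes l: "l < L"
  shows "measure_pmf.expectation (P' (e l)) (\<lambda>g. rest l g z) = (real L - 1) * r z"
proof -
  have "measure_pmf.expectation (P' (e l)) (\<lambda>g. rest l g z) =
      (\<Sum>l'\<in>{..<L} - {l}. measure_pmf.expectation (P' (e l)) (\<lambda>g. pmf (W (g (e l'))) z))"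
    unfolding rest_def
    by (rule Bochner_Integration.integral_sum)
       (auto intro: integrable_measure_pmf_bounded[where B=1] simp: pmf_le_1)
  also have "\<dots> = (\<Sum>l'\<in>{..<L} - {l}. r z)"
  proof (intro sum.cong refl)
    fix l' assume "l' \<in> {..<L} - {l}"
    then have "e l' \<in> I - {e l}"
      using e_in_I e_neq l by auto
    then show "measure_pmf.expectation (P' (e l)) (\<lambda>g. pmf (W (g (e l'))) z) = r z"
      unfolding P'_def r_eq_expectation using finite_I by (subst expectation_Pi_pmf_component) auto
  qed
  also have "\<dots> = (real L - 1) * r z"
    using l by simp
  finally show ?thesis .
qed

lemma expectation_block_sum:
  assumes "\<And>x. \<bar>u x\<bar> \<le> B"
  shows "measure_pmf.expectation P (\<lambda>g. \<Sum>l<L. u (g (e l))) = real L * measure_pmf.expectation p u"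
proof -
  have "measure_pmf.expectation P (\<lambda>g. \<Sum>l<L. u (g (e l))) =
      (\<Sum>l<L. measure_pmf.expectation P (\<lambda>g. u (g (e l))))"
    by (rule Bochner_Integration.integral_sum) (auto intro: integrable_measure_pmf_bounded assms)
  also have "\<dots> = (\<Sum>l<L. measure_pmf.expectation p u)"
    unfolding P_def using e_in_I finite_I by (intro sum.cong refl expectation_Pi_pmf_component) auto
  finally show ?thesis by simp
qed

lemma expectation_block_sum_sq:
  assumes bounded: "\<And>x. \<bar>u x\<bar> \<le> B" and centred: "measure_pmf.expectation p u = 0"
  shows "measure_pmf.expectation P (\<lambda>g. (\<Sum>l<L. u (g (e l)))\<^sup>2) =
    real L * measure_pmf.expectation p (\<lambda>x. (u x)\<^sup>2)"
proof -
  have cross: "measure_pmf.expectation P (\<lambda>g. u (g (e l)) * u (g (e l'))) =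
      (if l = l' then measure_pmf.expectation p (\<lambda>x. (u x)\<^sup>2) else 0)"
    if "l < L" "l' < L" for l l'
  proof (cases "l = l'")
    case True
    then show ?thesis
      unfolding P_def using finite_I e_in_I that
      by (simp add: power2_eq_square[symmetric]) (intro expectation_Pi_pmf_component, auto)
  next
    case False
    then have "measure_pmf.expectation P (\<lambda>g. u (g (e l)) * u (g (e l'))) =
        measure_pmf.expectation p u * measure_pmf.expectation p u"
      unfolding P_def using finite_I e_in_I that e_neq
      by (intro expectation_Pi_pmf_mult_indep[where Bu=B and Bv=B] bounded) auto
    then show ?thesis using False centred by simp
  qed
  have int: "integrable (measure_pmf P) (\<lambda>g. u (g (e l)) * u (g (e l')))" for l l'
  proof (rule integrable_measure_pmf_bounded[where B="B * B"])
    fix g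
    show "\<bar>u (g (e l)) * u (g (e l'))\<bar> \<le> B * B"
      unfolding abs_mult by (intro mult_mono bounded) (use bounded[of "g (e l)"] in auto)
  qed
  have "measure_pmf.expectation P (\<lambda>g. (\<Sum>l<L. u (g (e l)))\<^sup>2) =
     (\<Sum>l<L. \<Sum>l'<L. measure_pmf.expectation P (\<lambda>g. u (g (e l)) * u (g (e l'))))"
    using int by (simp add: power2_eq_square sum_product Bochner_Integration.integral_sum integrable_sum)
  also have "\<dots> = (\<Sum>l<L. \<Sum>l'<L. if l = l' then measure_pmf.expectation p (\<lambda>x. (u x)\<^sup>2) else 0)"
    using cross by (intro sum.cong refl) auto
  also have "\<dots> = real L * measure_pmf.expectation p (\<lambda>x. (u x)\<^sup>2)"
    by simp
  finally show ?thesis .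
qed


definition W_low :: "real \<Rightarrow> 'z \<Rightarrow> 'x \<Rightarrow> real" where
  "W_low C z x = (if pmf (W x) z \<le> C * r z then pmf (W x) z else 0)"

definition W_high :: "real \<Rightarrow> 'z \<Rightarrow> 'x \<Rightarrow> real" where
  "W_high C z x = (if pmf (W x) z > C * r z then pmf (W x) z else 0)"

definition low_ratio :: "real \<Rightarrow> 'z \<Rightarrow> 'x \<Rightarrow> real" where
  "low_ratio C z x = (if pmf (W x) z \<le> C * r z \<and> r z > 0 then (pmf (W x) z)\<^sup>2 / r z else 0)"

lemma pmf_eq_W_low_add_W_high: "pmf (W x) z = W_low C z x + W_high C z x"
  unfolding W_low_def W_high_def by auto

lemma W_low_nonneg: "W_low C z x \<ge> 0"
  unfolding W_low_def by auto

lemma W_low_le_1: "W_low C z x \<le> 1"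
  unfolding W_low_def by (auto simp: pmf_le_1)

lemma W_high_nonneg: "W_high C z x \<ge> 0"
  unfolding W_high_def by auto

lemma W_high_le_pmf: "W_high C z x \<le> pmf (W x) z"
  unfolding W_high_def by auto

lemma W_high_le_1: "W_high C z x \<le> 1"
  using W_high_le_pmf pmf_le_1 order_trans by fast

lemma low_ratio_nonneg: "low_ratio C z x \<ge> 0"
  unfolding low_ratio_def using r_nonneg by auto

lemma W_low_sq: "r z > 0 \<Longrightarrow> (W_low C z x)\<^sup>2 = r z * low_ratio C z x"
  unfolding W_low_def low_ratio_def by auto

lemma integrable_W_low: "integrable (measure_pmf M) (W_low C z)"
  by (rule integrable_measure_pmf_bounded[where B=1]) (simp add: W_low_nonneg W_low_le_1)

lemma integrable_W_high: "integrable (measure_pmf M) (W_high C z)"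
  by (rule integrable_measure_pmf_bounded[where B=1]) (simp add: W_high_nonneg W_high_le_1)

lemma integrable_low_ratio: "integrable (measure_pmf M) (low_ratio C z)"
proof (rule integrable_measure_pmf_bounded[where B="1 / r z"])
  fix x
  have "(pmf (W x) z)\<^sup>2 \<le> 1"
    using pmf_le_1[of "W x" z] by (simp add: power_le_one)
  then show "\<bar>low_ratio C z x\<bar> \<le> 1 / r z"
    unfolding low_ratio_def using r_nonneg[of z] by (auto simp: divide_right_mono)
qed

lemma expectation_W_high_nonneg: "measure_pmf.expectation p (W_high C z) \<ge> 0"
  by (intro integral_nonneg_AE AE_pmfI W_high_nonneg)

lemma expectation_W_high_le_r: "measure_pmf.expectation p (W_high C z) \<le> r z"
  unfolding r_eq_expectation
  by (intro integral_mono integrable_W_high W_high_le_pmf integrable_measure_pmf_bounded[where B=1])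
     (auto simp: pmf_le_1)

lemma expectation_low_ratio_nonneg: "measure_pmf.expectation p (low_ratio C z) \<ge> 0"
  by (intro integral_nonneg_AE AE_pmfI low_ratio_nonneg)

lemma delta_eq_sum: "delta p W C = (\<Sum>z\<in>UNIV. measure_pmf.expectation p (W_high C z))"
proof -
  have "delta p W C = measure_pmf.expectation p (\<lambda>x. \<Sum>z\<in>UNIV. W_high C z x)"
    unfolding delta_def W_high_def r_def[symmetric]
    by (intro Bochner_Integration.integral_cong refl) (simp add: sum.If_cases)
  also have "\<dots> = (\<Sum>z\<in>UNIV. measure_pmf.expectation p (W_high C z))"
    by (rule Bochner_Integration.integral_sum) (rule integrable_W_high)
  finally show ?thesis .
qed

lemma delta'_eq_sum: "delta' p W C = (\<Sum>z\<in>UNIV. measure_pmf.expectation p (low_ratio C z))"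
proof -
  have "delta' p W C = measure_pmf.expectation p (\<lambda>x. \<Sum>z\<in>UNIV. low_ratio C z x)"
    unfolding delta'_def low_ratio_def r_def[symmetric]
    by (intro Bochner_Integration.integral_cong refl) (simp add: sum.If_cases)
  also have "\<dots> = (\<Sum>z\<in>UNIV. measure_pmf.expectation p (low_ratio C z))"
    by (rule Bochner_Integration.integral_sum) (rule integrable_low_ratio)
  finally show ?thesis .
qed

lemma delta'_nonneg: "delta' p W C \<ge> 0"
  unfolding delta'_eq_sum by (intro sum_nonneg expectation_low_ratio_nonneg)


lemma ln_inverse_r_nonneg: "ln (1 / r z) \<ge> 0"
  using r_le_1[of z] r_nonneg[of z] by (cases "r z = 0") auto

lemma abs_pmf_mult_ln_ratio_le:
  assumes l: "l < L"
  shows "\<bar>pmf (W (g (e l))) z * ln (q g z / r z)\<bar> \<le> real L + \<bar>ln (r z)\<bar>"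
proof -
  define w where "w = pmf (W (g (e l))) z"
  have w: "0 \<le> w" "w \<le> 1" "w \<le> real L * q g z"
    using pmf_le_L_mult_q[OF l] by (auto simp: w_def pmf_le_1)
  show ?thesis
  proof (cases "q g z = 0 \<or> r z = 0")
    case True
    then show ?thesis using w by (auto simp: w_def[symmetric])
  next
    case False
    then have q: "q g z > 0" and r: "r z > 0"
      using q_nonneg[of g z] r_nonneg[of z] by auto
    have "\<bar>ln (q g z / r z)\<bar> \<le> \<bar>ln (q g z)\<bar> + \<bar>ln (r z)\<bar>"
      using q r by (simp add: ln_div abs_triangle_ineq4)
    then have "\<bar>w * ln (q g z / r z)\<bar> \<le> w * \<bar>ln (q g z)\<bar> + w * \<bar>ln (r z)\<bar>"
      using w by (simp add: abs_mult flip: distrib_left) (rule mult_left_mono; simp)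
    moreover have "w * \<bar>ln (q g z)\<bar> \<le> real L * (q g z * \<bar>ln (q g z)\<bar>)"
      using w by (simp add: mult_right_mono mult.assoc[symmetric])
    moreover have "real L * (q g z * \<bar>ln (q g z)\<bar>) \<le> real L"
      using mult_abs_ln_le_one[OF q_nonneg q_le_1] by (simp add: mult_left_le)
    moreover have "w * \<bar>ln (r z)\<bar> \<le> \<bar>ln (r z)\<bar>"
      using w by (simp add: mult_left_le_one_le)
    ultimately show ?thesis
      unfolding w_def by linarith
  qed
qed

text \<open>Below the threshold \<open>C r z\<close> we use \<open>ln m \<le> m - 1\<close>, above it \<open>m \<le> 1 / r z\<close>.\<close>

lemma pmf_mult_ln_mean_ratio_le:
  assumes x: "x \<in> set_pmf p" and w: "pmf (W x) z > 0"
  shows "pmf (W x) z * ln ((pmf (W x) z + (real L - 1) * r z) / (real L * r z))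
     \<le> low_ratio C z x / real L + W_high C z x * ln (1 / r z)"
proof -
  define w where "w = pmf (W x) z"
  have r: "r z > 0"
    using r_pos[OF x w] .
  have L: "real L \<ge> 1"
    using L_pos by simp
  define m where "m = (w + (real L - 1) * r z) / (real L * r z)"
  have m: "m > 0"
    unfolding m_def using r w L by (intro divide_pos_pos) (auto simp: w_def intro: add_pos_nonneg)
  show ?thesis
  proof (cases "w \<le> C * r z")
    case True
    have "ln m \<le> m - 1"
      using m by (rule ln_le_minus_one)
    also have "m - 1 = (w - r z) / (real L * r z)"
      unfolding m_def using r L by (simp add: field_simps)
    also have "\<dots> \<le> w / (real L * r z)"
      using r L by (intro divide_right_mono) auto
    finally have "w * ln m \<le> w * (w / (real L * r z))"
      using w unfolding w_def by (intro mult_left_mono) auto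
    also have "\<dots> = low_ratio C z x / real L + W_high C z x * ln (1 / r z)"
      using True r unfolding low_ratio_def W_high_def w_def by (simp add: power2_eq_square field_simps)
    finally show ?thesis unfolding m_def w_def .
  next
    case False
    have "w + (real L - 1) * r z \<le> 1 + (real L - 1) * 1"
      using pmf_le_1[of "W x" z] r_le_1[of z] L unfolding w_def by (intro add_mono mult_left_mono) auto
    then have "m \<le> real L / (real L * r z)"
      unfolding m_def using r L by (intro divide_right_mono) auto
    also have "\<dots> = 1 / r z"
      using L by simp
    finally have "m \<le> 1 / r z" .
    then have "ln m \<le> ln (1 / r z)"
      using m by (intro ln_mono) auto
    then have "w * ln m \<le> w * ln (1 / r z)"
      using w unfolding w_def by (intro mult_left_mono) auto
    also have "\<dots> = low_ratio C z x / real L + W_high C z x * ln (1 / r z)"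
      using False r unfolding low_ratio_def W_high_def w_def by simp
    finally show ?thesis unfolding m_def w_def .
  qed
qed

lemma expectation_pmf_mult_ln_ratio_fun_upd_le:
  assumes l: "l < L" and x: "x \<in> set_pmf p"
  shows "measure_pmf.expectation (P' (e l)) (\<lambda>g. pmf (W x) z * ln (q (g(e l := x)) z / r z))
     \<le> low_ratio C z x / real L + W_high C z x * ln (1 / r z)"
proof (cases "pmf (W x) z = 0")
  case True
  then show ?thesis
    using low_ratio_nonneg[of C z x] W_high_nonneg[of C z x] ln_inverse_r_nonneg[of z] by simp
next
  case False
  define w where "w = pmf (W x) z"
  have w: "w > 0"
    using False unfolding w_def by (simp add: order_less_le)
  have r: "r z > 0"
    using r_pos[OF x] w unfolding w_def by auto
  have L: "real L \<ge> 1"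
    using L_pos by simp
  define y where "y g = (w + rest l g z) / (real L * r z)" for g
  have q_ratio: "q (g(e l := x)) z / r z = y g" for g
    unfolding y_def w_def using q_fun_upd[OF l] r by (simp add: field_simps)
  have y_lower: "w / (real L * r z) \<le> y g" for g
    unfolding y_def using rest_nonneg[of l g z] r L by (intro divide_right_mono) auto
  have y_upper: "y g \<le> (w + real L) / (real L * r z)" for g
    unfolding y_def using rest_le_L[OF l, of g z] r L by (intro divide_right_mono) auto
  have "integrable (measure_pmf (P' (e l))) (\<lambda>g. rest l g z)"
    by (rule integrable_measure_pmf_bounded[where B="real L"])
       (use rest_nonneg rest_le_L[OF l] in auto)
  then have Ey: "measure_pmf.expectation (P' (e l)) y = (w + (real L - 1) * r z) / (real L * r z)"
    unfolding y_def using expectation_rest[OF l] by (simp add: Bochner_Integration.integral_add)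
  have "measure_pmf.expectation (P' (e l)) (\<lambda>g. ln (y g)) \<le> ln (measure_pmf.expectation (P' (e l)) y)"
    by (rule expectation_ln_le_ln_expectation[OF _ y_lower y_upper]) (use w r L in simp)
  then have "w * measure_pmf.expectation (P' (e l)) (\<lambda>g. ln (y g)) \<le>
      w * ln ((w + (real L - 1) * r z) / (real L * r z))"
    using w Ey by (intro mult_left_mono) auto
  also have "\<dots> \<le> low_ratio C z x / real L + W_high C z x * ln (1 / r z)"
    using pmf_mult_ln_mean_ratio_le[OF x] w unfolding w_def by auto
  finally show ?thesis
    by (simp add: q_ratio w_def)
qed

lemma expectation_pmf_mult_ln_ratio_le:
  assumes l: "l < L"
  shows "measure_pmf.expectation P (\<lambda>g. pmf (W (g (e l))) z * ln (q g z / r z))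
     \<le> measure_pmf.expectation p (\<lambda>x. low_ratio C z x / real L + W_high C z x * ln (1 / r z))"
proof -
  have "measure_pmf.expectation P (\<lambda>g. pmf (W (g (e l))) z * ln (q g z / r z)) =
     measure_pmf.expectation p (\<lambda>x. measure_pmf.expectation (P' (e l))
        (\<lambda>g. pmf (W x) z * ln (q (g(e l := x)) z / r z)))"
    unfolding P_def P'_def using e_in_I l
    by (subst expectation_Pi_pmf_split[OF finite_I, where k="e l" and K="real L + \<bar>ln (r z)\<bar>"])
       (auto intro: abs_pmf_mult_ln_ratio_le[OF l])
  also have "\<dots> \<le> measure_pmf.expectation p (\<lambda>x. low_ratio C z x / real L + W_high C z x * ln (1 / r z))"
    using integrable_low_ratio integrable_W_high low_ratio_nonneg W_high_nonneg ln_inverse_r_nonneg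
    by (intro integral_mono_AE' AE_pmfI expectation_pmf_mult_ln_ratio_fun_upd_le[OF l]) auto
  finally show ?thesis .
qed

lemma KL_div_q_eq:
  "KL_div (q g) r = (\<Sum>z\<in>UNIV. (\<Sum>l<L. pmf (W (g (e l))) z * ln (q g z / r z)) / real L)"
proof -
  have "(if q g z = 0 then 0 else q g z * ln (q g z / r z)) =
        (\<Sum>l<L. pmf (W (g (e l))) z * ln (q g z / r z)) / real L" for z
    by (simp add: q_def sum_distrib_right[symmetric])
  then show ?thesis unfolding KL_div_def by simp
qed

lemma abs_KL_div_q_le: "\<bar>KL_div (q g) r\<bar> \<le> (\<Sum>z\<in>UNIV. real L + \<bar>ln (r z)\<bar>)"
proof -
  have "\<bar>(\<Sum>l<L. pmf (W (g (e l))) z * ln (q g z / r z))\<bar> \<le> (\<Sum>l<L. real L + \<bar>ln (r z)\<bar>)" for z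
    by (rule order_trans[OF sum_abs]) (intro sum_mono abs_pmf_mult_ln_ratio_le, simp)
  then have "\<bar>(\<Sum>l<L. pmf (W (g (e l))) z * ln (q g z / r z)) / real L\<bar> \<le> real L + \<bar>ln (r z)\<bar>" for z
    using L_pos by (simp add: field_simps)
  then show ?thesis
    unfolding KL_div_q_eq by (intro order_trans[OF sum_abs] sum_mono)
qed

lemma integrable_KL_div_q: "integrable (measure_pmf P) (\<lambda>g. KL_div (q g) r)"
  by (rule integrable_measure_pmf_bounded) (rule abs_KL_div_q_le)

lemma KL_div_q_nonneg: "g \<in> set_pmf P \<Longrightarrow> KL_div (q g) r \<ge> 0"
  by (rule KL_div_nonneg) (use q_nonneg sum_q r_nonneg sum_r q_support in auto)

lemma expectation_KL_div_le_delta: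
  "measure_pmf.expectation P (\<lambda>g. KL_div (q g) r) \<le>
     eta (delta p W C) + delta p W C * ln (real CARD('z)) + delta' p W C / real L"
proof -
  define h where "h z x = low_ratio C z x / real L + W_high C z x * ln (1 / r z)" for z x
  have int: "integrable (measure_pmf P) (\<lambda>g. pmf (W (g (e l))) z * ln (q g z / r z))" if "l < L" for l z
    by (rule integrable_measure_pmf_bounded) (rule abs_pmf_mult_ln_ratio_le[OF that])
  have "measure_pmf.expectation P (\<lambda>g. KL_div (q g) r) = (\<Sum>z\<in>UNIV.
      measure_pmf.expectation P (\<lambda>g. (\<Sum>l<L. pmf (W (g (e l))) z * ln (q g z / r z)) / real L))"
    unfolding KL_div_q_eq using int
    by (intro Bochner_Integration.integral_sum integrable_divide integrable_sum) auto
  also have "\<dots> =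
     (\<Sum>z\<in>UNIV. (\<Sum>l<L. measure_pmf.expectation P (\<lambda>g. pmf (W (g (e l))) z * ln (q g z / r z))) / real L)"
    using int by (intro sum.cong refl) (simp add: Bochner_Integration.integral_sum)
  also have "\<dots> \<le> (\<Sum>z\<in>UNIV. (\<Sum>l<L. measure_pmf.expectation p (h z)) / real L)"
    unfolding h_def by (intro sum_mono divide_right_mono expectation_pmf_mult_ln_ratio_le) auto
  also have "\<dots> = (\<Sum>z\<in>UNIV. measure_pmf.expectation p (low_ratio C z) / real L
        + measure_pmf.expectation p (W_high C z) * ln (1 / r z))"
    unfolding h_def using L_pos integrable_low_ratio integrable_W_high
    by (simp add: Bochner_Integration.integral_add)
  also have "\<dots> \<le> (\<Sum>z\<in>UNIV. measure_pmf.expectation p (low_ratio C z) / real L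
        + eta (measure_pmf.expectation p (W_high C z)))"
    by (intro sum_mono add_left_mono mult_ln_inverse_le_eta expectation_W_high_nonneg
        expectation_W_high_le_r)
  also have "\<dots> = delta' p W C / real L + (\<Sum>z\<in>UNIV. eta (measure_pmf.expectation p (W_high C z)))"
    by (simp add: sum.distrib delta'_eq_sum sum_divide_distrib)
  also have "\<dots> \<le> delta' p W C / real L + (eta (delta p W C) + delta p W C * ln (real CARD('z)))"
    unfolding delta_eq_sum by (intro add_left_mono sum_eta_le expectation_W_high_nonneg) auto
  finally show ?thesis by simp
qed


lemma rest_div_L_bounds: "l < L \<Longrightarrow> 0 \<le> rest l g z / real L \<and> rest l g z / real L \<le> 1"
  using rest_nonneg[of l g z] rest_le_L[of l g z] L_pos by auto

lemma integrable_rest_powr: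
  assumes "l < L" and "s \<ge> 0"
  shows "integrable (measure_pmf M) (\<lambda>g. (rest l g z / real L) powr s)"
proof (rule integrable_measure_pmf_bounded[where B=1])
  fix g
  show "\<bar>(rest l g z / real L) powr s\<bar> \<le> 1"
    using rest_div_L_bounds[OF assms(1), of g z] assms(2) by (auto intro: powr_le1)
qed

lemma expectation_rest_powr_le:
  assumes l: "l < L" and s: "0 < s" "s < 1"
  shows "measure_pmf.expectation (P' (e l)) (\<lambda>g. (rest l g z / real L) powr s) \<le> r z powr s"
proof -
  have "measure_pmf.expectation (P' (e l)) (\<lambda>g. (rest l g z / real L) powr s)
      \<le> (measure_pmf.expectation (P' (e l)) (\<lambda>g. rest l g z / real L)) powr s"
    by (rule expectation_powr_le_powr_expectation[where B=1]) (use rest_div_L_bounds[OF l] s in auto)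
  also have "measure_pmf.expectation (P' (e l)) (\<lambda>g. rest l g z / real L) = (real L - 1) * r z / real L"
    using expectation_rest[OF l] by simp
  also have "((real L - 1) * r z / real L) powr s \<le> r z powr s"
    using L_pos r_nonneg[of z] s mult_right_mono[of 1 "real L" "r z"]
    by (intro powr_mono2) (auto simp: field_simps)
  finally show ?thesis .
qed

lemma expectation_pmf_mult_q_powr_fun_upd_le:
  assumes l: "l < L" and s: "0 < s" "s < 1"
  shows "measure_pmf.expectation (P' (e l)) (\<lambda>g. pmf (W x) z * q (g(e l := x)) z powr s)
     \<le> pmf (W x) z * ((pmf (W x) z / real L) powr s + r z powr s)"
proof -
  define w where "w = pmf (W x) z"
  have w: "0 \<le> w" "w \<le> 1"
    by (simp_all add: w_def pmf_le_1)
  have q_eq: "q (g(e l := x)) z = w / real L + rest l g z / real L" for g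
    unfolding w_def using q_fun_upd[OF l] by (simp add: add_divide_distrib)
  have int_q: "integrable (measure_pmf (P' (e l))) (\<lambda>g. w * q (g(e l := x)) z powr s)"
  proof (rule integrable_measure_pmf_bounded[where B=1])
    fix g
    have "q (g(e l := x)) z powr s \<le> 1"
      using q_nonneg q_le_1 s by (intro powr_le1) auto
    then show "\<bar>w * q (g(e l := x)) z powr s\<bar> \<le> 1"
      using w by (simp add: abs_mult mult_le_one)
  qed
  have "measure_pmf.expectation (P' (e l)) (\<lambda>g. w * q (g(e l := x)) z powr s)
     \<le> measure_pmf.expectation (P' (e l)) (\<lambda>g. w * ((w / real L) powr s + (rest l g z / real L) powr s))"
    using int_q integrable_rest_powr[OF l less_imp_le[OF s(1)]] w rest_div_L_bounds[OF l] s L_pos unfolding q_eq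
    by (intro integral_mono mult_left_mono powr_add_le_add_powr) auto
  also have "\<dots> = w * ((w / real L) powr s + measure_pmf.expectation (P' (e l)) (\<lambda>g. (rest l g z / real L) powr s))"
    using integrable_rest_powr[OF l less_imp_le[OF s(1)]] by simp
  also have "\<dots> \<le> w * ((w / real L) powr s + r z powr s)"
    using w expectation_rest_powr_le[OF l s] by (intro mult_left_mono add_left_mono) auto
  finally show ?thesis
    unfolding w_def .
qed

lemma expectation_pmf_mult_q_powr_le:
  assumes l: "l < L" and s: "0 < s" "s < 1"
  shows "measure_pmf.expectation P (\<lambda>g. pmf (W (g (e l))) z * q g z powr s)
     \<le> real L powr (- s) * measure_pmf.expectation p (\<lambda>x. pmf (W x) z powr (1 + s)) + r z powr (1 + s)"
proof -
  define U where "U x = pmf (W x) z * ((pmf (W x) z / real L) powr s + r z powr s)" for x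
  have U_eq: "U x = real L powr (- s) * pmf (W x) z powr (1 + s) + pmf (W x) z * r z powr s" for x
    unfolding U_def using L_pos
    by (cases "pmf (W x) z = 0") (simp_all add: powr_divide powr_add powr_minus field_simps)
  have int_powr: "integrable (measure_pmf p) (\<lambda>x. pmf (W x) z powr (1 + s))"
    by (rule integrable_measure_pmf_bounded[where B=1]) (use s in \<open>auto intro!: powr_le1 simp: pmf_le_1\<close>)
  have int_pmf: "integrable (measure_pmf p) (\<lambda>x. pmf (W x) z)"
    by (rule integrable_measure_pmf_bounded[where B=1]) (auto simp: pmf_le_1)
  have bounded: "\<bar>pmf (W (g (e l))) z * q g z powr s\<bar> \<le> 1" for g
  proof -
    have "q g z powr s \<le> 1"
      using q_nonneg q_le_1 s by (intro powr_le1) auto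
    then show ?thesis
      using pmf_le_1[of "W (g (e l))" z] by (simp add: abs_mult mult_le_one)
  qed
  have "measure_pmf.expectation P (\<lambda>g. pmf (W (g (e l))) z * q g z powr s) =
     measure_pmf.expectation p (\<lambda>x. measure_pmf.expectation (P' (e l))
        (\<lambda>g. pmf (W x) z * q (g(e l := x)) z powr s))"
    unfolding P_def P'_def using e_in_I l
    by (subst expectation_Pi_pmf_split[OF finite_I, where k="e l" and K=1])
       (auto intro: abs_le_D1[OF bounded])
  also have "\<dots> \<le> measure_pmf.expectation p U"
  proof (rule integral_mono_AE')
    show "integrable (measure_pmf p) U"
      unfolding U_eq using int_powr int_pmf by simp
    show "AE x in measure_pmf p. measure_pmf.expectation (P' (e l))
        (\<lambda>g. pmf (W x) z * q (g(e l := x)) z powr s) \<le> U x"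
      unfolding U_def by (intro AE_pmfI expectation_pmf_mult_q_powr_fun_upd_le[OF l s])
    show "AE x in measure_pmf p. 0 \<le> U x"
      unfolding U_def by (intro AE_pmfI) simp
  qed
  also have "\<dots> = real L powr (- s) * measure_pmf.expectation p (\<lambda>x. pmf (W x) z powr (1 + s)) + r z * r z powr s"
    unfolding U_eq using int_powr int_pmf by (simp add: r_eq_expectation)
  also have "r z * r z powr s = r z powr (1 + s)"
    using r_nonneg[of z] by (cases "r z = 0") (simp_all add: powr_add)
  finally show ?thesis .
qed

lemma expectation_q_powr_le:
  assumes s: "0 < s" "s < 1"
  shows "measure_pmf.expectation P (\<lambda>g. q g z powr (1 + s))
     \<le> real L powr (- s) * measure_pmf.expectation p (\<lambda>x. pmf (W x) z powr (1 + s)) + r z powr (1 + s)"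
proof -
  have q_powr_eq: "q g z powr (1 + s) = (\<Sum>l<L. pmf (W (g (e l))) z * q g z powr s) / real L" for g
  proof -
    have "q g z powr (1 + s) = q g z * q g z powr s"
      using q_nonneg[of g z] by (cases "q g z = 0") (simp_all add: powr_add)
    then show ?thesis
      unfolding q_def[of g z] by (simp add: sum_distrib_right)
  qed
  have int: "integrable (measure_pmf P) (\<lambda>g. pmf (W (g (e l))) z * q g z powr s)" for l
  proof (rule integrable_measure_pmf_bounded[where B=1])
    fix g
    have "q g z powr s \<le> 1"
      using q_nonneg q_le_1 s by (intro powr_le1) auto
    then show "\<bar>pmf (W (g (e l))) z * q g z powr s\<bar> \<le> 1"
      using pmf_le_1[of "W (g (e l))" z] by (simp add: abs_mult mult_le_one)
  qed
  have "measure_pmf.expectation P (\<lambda>g. q g z powr (1 + s)) =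
      (\<Sum>l<L. measure_pmf.expectation P (\<lambda>g. pmf (W (g (e l))) z * q g z powr s)) / real L"
    unfolding q_powr_eq using int by (simp add: Bochner_Integration.integral_sum)
  also have "\<dots> \<le> (\<Sum>l<L. real L powr (- s) * measure_pmf.expectation p (\<lambda>x. pmf (W x) z powr (1 + s))
      + r z powr (1 + s)) / real L"
    by (intro divide_right_mono sum_mono expectation_pmf_mult_q_powr_le s) auto
  also have "\<dots> = real L powr (- s) * measure_pmf.expectation p (\<lambda>x. pmf (W x) z powr (1 + s)) + r z powr (1 + s)"
    using L_pos by simp
  finally show ?thesis .
qed

definition renyi_sum :: "real \<Rightarrow> ('i \<Rightarrow> 'x) \<Rightarrow> real" where
  "renyi_sum s g = (\<Sum>z\<in>UNIV. q g z powr (1 + s) * r z powr (- s))"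

lemma KL_div_q_le_ln_renyi_sum: "g \<in> set_pmf P \<Longrightarrow> s > 0 \<Longrightarrow> s * KL_div (q g) r \<le> ln (renyi_sum s g)"
  unfolding renyi_sum_def by (rule KL_div_le_ln_renyi_sum) (use q_nonneg sum_q r_nonneg q_support in auto)

lemma renyi_sum_ge_1:
  assumes g: "g \<in> set_pmf P" and s: "s > 0"
  shows "1 \<le> renyi_sum s g"
proof -
  have "renyi_sum s g > 0"
    unfolding renyi_sum_def by (rule renyi_sum_pos) (use q_nonneg sum_q r_nonneg q_support g in auto)
  moreover have "0 \<le> s * KL_div (q g) r"
    using KL_div_q_nonneg[OF g] s by simp
  then have "0 \<le> ln (renyi_sum s g)"
    using KL_div_q_le_ln_renyi_sum[OF g s] by linarith
  ultimately show ?thesis by simp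
qed

lemma renyi_sum_le: "s > 0 \<Longrightarrow> renyi_sum s g \<le> (\<Sum>z\<in>UNIV. r z powr (- s))"
  unfolding renyi_sum_def using q_nonneg q_le_1
  by (intro sum_mono mult_left_le_one_le powr_le1) auto

lemma expectation_renyi_sum_le:
  assumes s: "0 < s" "s < 1"
  shows "measure_pmf.expectation P (renyi_sum s) \<le> 1 + real L powr (- s) * exp (phi (- s) W p)"
proof -
  define EW where "EW z = measure_pmf.expectation p (\<lambda>x. pmf (W x) z powr (1 + s))" for z
  have int: "integrable (measure_pmf P) (\<lambda>g. q g z powr (1 + s))" for z
    by (rule integrable_measure_pmf_bounded[where B=1]) (use q_nonneg q_le_1 s in \<open>auto intro!: powr_le1\<close>)
  have term_le: "measure_pmf.expectation P (\<lambda>g. q g z powr (1 + s)) * r z powr (- s)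
      \<le> real L powr (- s) * (EW z * r z powr (- s)) + r z" for z
  proof (cases "r z = 0")
    case False
    with r_nonneg[of z] have "r z > 0" by simp
    have "measure_pmf.expectation P (\<lambda>g. q g z powr (1 + s)) * r z powr (- s)
      \<le> (real L powr (- s) * EW z + r z powr (1 + s)) * r z powr (- s)"
      unfolding EW_def by (intro mult_right_mono expectation_q_powr_le s) auto
    also have "\<dots> = real L powr (- s) * (EW z * r z powr (- s)) + r z"
      using \<open>r z > 0\<close> by (simp add: distrib_right powr_add[symmetric])
    finally show ?thesis .
  qed simp
  have "measure_pmf.expectation P (\<lambda>g. \<Sum>z\<in>UNIV. q g z powr (1 + s) * r z powr (- s)) =
      (\<Sum>z\<in>UNIV. measure_pmf.expectation P (\<lambda>g. q g z powr (1 + s)) * r z powr (- s))"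
    using int by (simp add: Bochner_Integration.integral_sum)
  also have "\<dots> \<le> (\<Sum>z\<in>UNIV. real L powr (- s) * (EW z * r z powr (- s)) + r z)"
    by (intro sum_mono term_le)
  also have "\<dots> = real L powr (- s) * (\<Sum>z\<in>UNIV. EW z * r z powr (- s)) + 1"
    by (simp add: sum.distrib sum_distrib_left sum_r)
  also have "(\<Sum>z\<in>UNIV. EW z * r z powr (- s)) \<le>
      (\<Sum>z\<in>UNIV. (measure_pmf.expectation p (\<lambda>x. pmf (W x) z powr (1 / (1 - s)))) powr (1 - s))"
    unfolding EW_def r_eq_expectation
    by (intro sum_mono expectation_powr_interpolation s) (auto simp: pmf_le_1)
  also have "\<dots> \<le> exp (phi (- s) W p)"
  proof -
    let ?T = "\<Sum>z\<in>UNIV. (measure_pmf.expectation p (\<lambda>x. pmf (W x) z powr (1 / (1 - s)))) powr (1 - s)"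
    have "?T \<ge> 0"
      by (intro sum_nonneg) simp
    then show ?thesis
      unfolding phi_def by (cases "?T = 0") simp_all
  qed
  finally show ?thesis
    by (simp add: mult_left_mono renyi_sum_def[abs_def])
qed

lemma expectation_ln_renyi_sum_le:
  assumes s: "0 < s" "s < 1"
  shows "measure_pmf.expectation P (\<lambda>g. ln (renyi_sum s g)) \<le> ln (1 + real L powr (- s) * exp (phi (- s) W p))"
proof -
  have "measure_pmf.expectation P (\<lambda>g. ln (renyi_sum s g)) \<le> ln (measure_pmf.expectation P (renyi_sum s))"
    by (rule expectation_ln_le_ln_expectation[of 1]) (use renyi_sum_ge_1 renyi_sum_le s in auto)
  also have "\<dots> \<le> ln (1 + real L powr (- s) * exp (phi (- s) W p))"
  proof (rule ln_mono)
    have "integrable (measure_pmf P) (renyi_sum s)"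
      by (rule integrable_measure_pmf_bounded[where B="\<Sum>z\<in>UNIV. r z powr (- s)"])
         (use renyi_sum_ge_1 renyi_sum_le s in force)
    then show "0 < measure_pmf.expectation P (renyi_sum s)"
      using renyi_sum_ge_1 s by (intro expectation_pos_pmf) (auto intro: less_le_trans[OF zero_less_one])
  qed (rule expectation_renyi_sum_le[OF s])
  finally show ?thesis .
qed

lemma expectation_KL_div_le_phi:
  assumes t: "-1 < t" "t < 0"
  shows "measure_pmf.expectation P (\<lambda>g. KL_div (q g) r) \<le> ln (1 + real L powr t * exp (phi t W p)) / (- t)"
proof -
  define s where "s = - t"
  have s: "0 < s" "s < 1"
    using t by (auto simp: s_def)
  have "integrable (measure_pmf P) (\<lambda>g. ln (renyi_sum s g))"
    by (rule integrable_measure_pmf_bounded[where B="\<bar>ln 1\<bar> + \<bar>ln (\<Sum>z\<in>UNIV. r z powr (- s))\<bar>"])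
       (rule abs_ln_le_of_between; use renyi_sum_ge_1 renyi_sum_le s in auto)
  then have "integrable (measure_pmf P) (\<lambda>g. ln (renyi_sum s g) / s)"
    by simp
  then have "measure_pmf.expectation P (\<lambda>g. KL_div (q g) r) \<le> measure_pmf.expectation P (\<lambda>g. ln (renyi_sum s g) / s)"
    using KL_div_q_le_ln_renyi_sum renyi_sum_ge_1 s by (intro integral_mono_AE' AE_pmfI) (auto simp: field_simps)
  also have "\<dots> = measure_pmf.expectation P (\<lambda>g. ln (renyi_sum s g)) / s"
    by simp
  also have "\<dots> \<le> ln (1 + real L powr (- s) * exp (phi (- s) W p)) / s"
    using expectation_ln_renyi_sum_le[OF s] s by (intro divide_right_mono) auto
  finally show ?thesis
    by (simp add: s_def)
qed


definition r_low :: "real \<Rightarrow> 'z \<Rightarrow> real" where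
  "r_low C z = measure_pmf.expectation p (W_low C z)"

definition r_high :: "real \<Rightarrow> 'z \<Rightarrow> real" where
  "r_high C z = measure_pmf.expectation p (W_high C z)"

definition q_low :: "real \<Rightarrow> ('i \<Rightarrow> 'x) \<Rightarrow> 'z \<Rightarrow> real" where
  "q_low C g z = (\<Sum>l<L. W_low C z (g (e l))) / real L"

definition q_high :: "real \<Rightarrow> ('i \<Rightarrow> 'x) \<Rightarrow> 'z \<Rightarrow> real" where
  "q_high C g z = (\<Sum>l<L. W_high C z (g (e l))) / real L"

lemma r_eq_r_low_add_r_high: "r z = r_low C z + r_high C z"
  unfolding r_low_def r_high_def r_eq_expectation pmf_eq_W_low_add_W_high[of _ z C]
  using integrable_W_low integrable_W_high by (simp add: Bochner_Integration.integral_add)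

lemma q_eq_q_low_add_q_high: "q g z = q_low C g z + q_high C g z"
  unfolding q_def q_low_def q_high_def pmf_eq_W_low_add_W_high[of _ z C]
  by (simp add: sum.distrib add_divide_distrib)

lemma r_low_nonneg: "r_low C z \<ge> 0"
  unfolding r_low_def by (intro integral_nonneg_AE AE_pmfI W_low_nonneg)

lemma r_low_le_1: "r_low C z \<le> 1"
  using r_eq_r_low_add_r_high[of z C] r_le_1[of z] expectation_W_high_nonneg[of C z]
  by (simp add: r_high_def)

lemma q_low_nonneg: "q_low C g z \<ge> 0"
  unfolding q_low_def by (intro divide_nonneg_nonneg sum_nonneg W_low_nonneg) auto

lemma q_low_le_1: "q_low C g z \<le> 1"
proof -
  have "(\<Sum>l<L. W_low C z (g (e l))) \<le> (\<Sum>l<L. 1)"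
    by (intro sum_mono W_low_le_1)
  then show ?thesis
    unfolding q_low_def using L_pos by (simp add: field_simps)
qed

lemma q_high_nonneg: "q_high C g z \<ge> 0"
  unfolding q_high_def by (intro divide_nonneg_nonneg sum_nonneg W_high_nonneg) auto

lemma expectation_q_high: "measure_pmf.expectation P (\<lambda>g. q_high C g z) = r_high C z"
  unfolding q_high_def r_high_def using L_pos
  by (simp add: expectation_block_sum[where B=1] W_high_nonneg W_high_le_1)

lemma q_low_eq_0: "g \<in> set_pmf P \<Longrightarrow> r z = 0 \<Longrightarrow> q_low C g z = 0"
  using block_entry_in_set_pmf r_pos W_low_nonneg[of C z] pmf_eq_W_low_add_W_high[of _ z C]
  unfolding q_low_def W_low_def by (force intro: sum.neutral)

lemma r_low_eq_0: "r z = 0 \<Longrightarrow> r_low C z = 0"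
  using r_eq_r_low_add_r_high[of z C] r_low_nonneg[of C z] expectation_W_high_nonneg[of C z]
  by (simp add: r_high_def)

lemma abs_q_low_sub_r_low_le_1: "\<bar>q_low C g z - r_low C z\<bar> \<le> 1"
  using q_low_nonneg[of C g z] q_low_le_1[of C g z] r_low_nonneg[of C z] r_low_le_1[of C z] by auto

lemma integrable_abs_q_low_sub_r_low: "integrable (measure_pmf P) (\<lambda>g. \<bar>q_low C g z - r_low C z\<bar>)"
  by (rule integrable_measure_pmf_bounded[where B=1]) (simp add: abs_q_low_sub_r_low_le_1)

lemma expectation_sq_q_low_sub_r_low_le:
  "measure_pmf.expectation P (\<lambda>g. (q_low C g z - r_low C z)\<^sup>2) \<le>
    measure_pmf.expectation p (\<lambda>x. (W_low C z x)\<^sup>2) / real L"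
proof -
  define u where "u x = W_low C z x - r_low C z" for x
  have u_bounded: "\<bar>u x\<bar> \<le> 1" for x
    unfolding u_def using W_low_nonneg[of C z x] W_low_le_1[of C z x] r_low_nonneg[of C z] r_low_le_1[of C z]
    by auto
  have "measure_pmf.expectation p u = 0"
    unfolding u_def r_low_def using integrable_W_low by simp
  note sum_sq = expectation_block_sum_sq[OF u_bounded this]
  have "q_low C g z - r_low C z = (\<Sum>l<L. u (g (e l))) / real L" for g
    unfolding q_low_def u_def using L_pos by (simp add: sum_subtractf field_simps)
  then have "measure_pmf.expectation P (\<lambda>g. (q_low C g z - r_low C z)\<^sup>2) =
      measure_pmf.expectation p (\<lambda>x. (u x)\<^sup>2) / real L"
    using sum_sq L_pos by (simp add: power_divide power2_eq_square)
  also have "measure_pmf.expectation p (\<lambda>x. (u x)\<^sup>2) =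
      measure_pmf.expectation p (\<lambda>x. (W_low C z x)\<^sup>2) - (r_low C z)\<^sup>2"
  proof -
    have "integrable (measure_pmf p) (\<lambda>x. (W_low C z x)\<^sup>2)"
      by (rule integrable_measure_pmf_bounded[where B=1])
         (simp add: W_low_nonneg W_low_le_1 power_le_one)
    then show ?thesis
      unfolding u_def power2_diff using integrable_W_low
      by (simp add: Bochner_Integration.integral_diff Bochner_Integration.integral_add r_low_def
          power2_eq_square)
  qed
  finally show ?thesis
    using L_pos by (simp add: divide_right_mono)
qed

lemma expectation_abs_q_low_sub_r_low_le:
  assumes c: "c > 0"
  shows "measure_pmf.expectation P (\<lambda>g. \<bar>q_low C g z - r_low C z\<bar>) \<le>
    measure_pmf.expectation p (low_ratio C z) / (2 * c * real L) + c * r z / 2"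
proof (cases "r z = 0")
  case True
  then have "measure_pmf.expectation P (\<lambda>g. \<bar>q_low C g z - r_low C z\<bar>) = measure_pmf.expectation P (\<lambda>g. 0)"
    by (intro integral_cong_AE) (auto simp: AE_measure_pmf_iff q_low_eq_0 r_low_eq_0)
  then show ?thesis
    using True expectation_low_ratio_nonneg[of C z] c by simp
next
  case False
  with r_nonneg[of z] have r: "r z > 0" by simp
  have int_sq: "integrable (measure_pmf P) (\<lambda>g. (q_low C g z - r_low C z)\<^sup>2)"
    by (rule integrable_measure_pmf_bounded[where B=1]) (simp add: abs_square_le_1 abs_q_low_sub_r_low_le_1)
  have "measure_pmf.expectation P (\<lambda>g. \<bar>q_low C g z - r_low C z\<bar>) \<le>
      measure_pmf.expectation P (\<lambda>g. (q_low C g z - r_low C z)\<^sup>2 / (2 * (c * r z)) + c * r z / 2)"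
    using integrable_abs_q_low_sub_r_low int_sq c r by (intro integral_mono abs_le_quadratic_tangent) auto
  also have "\<dots> = measure_pmf.expectation P (\<lambda>g. (q_low C g z - r_low C z)\<^sup>2) / (2 * (c * r z)) + c * r z / 2"
    using int_sq by simp
  also have "\<dots> \<le> measure_pmf.expectation p (\<lambda>x. (W_low C z x)\<^sup>2) / real L / (2 * (c * r z)) + c * r z / 2"
    using c r by (intro add_right_mono divide_right_mono expectation_sq_q_low_sub_r_low_le) auto
  also have "measure_pmf.expectation p (\<lambda>x. (W_low C z x)\<^sup>2) = r z * measure_pmf.expectation p (low_ratio C z)"
    using W_low_sq[OF r] by simp
  finally show ?thesis
    using r c by (simp add: field_simps)
qed

text \<open>Optimising the quadratic bound of the previous lemma over \<open>c\<close> gives the square root.\<close>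

lemma expectation_sum_abs_q_low_sub_r_low_le:
  "measure_pmf.expectation P (\<lambda>g. \<Sum>z\<in>UNIV. \<bar>q_low C g z - r_low C z\<bar>) \<le> sqrt (delta' p W C / real L)"
proof (rule le_sqrt_of_tangent_bounds)
  show "0 \<le> delta' p W C / real L"
    using delta'_nonneg by simp
  fix c :: real
  assume c: "c > 0"
  have "measure_pmf.expectation P (\<lambda>g. \<Sum>z\<in>UNIV. \<bar>q_low C g z - r_low C z\<bar>) =
      (\<Sum>z\<in>UNIV. measure_pmf.expectation P (\<lambda>g. \<bar>q_low C g z - r_low C z\<bar>))"
    by (rule Bochner_Integration.integral_sum) (rule integrable_abs_q_low_sub_r_low)
  also have "\<dots> \<le> (\<Sum>z\<in>UNIV. measure_pmf.expectation p (low_ratio C z) / (2 * c * real L) + c * r z / 2)"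
    by (intro sum_mono expectation_abs_q_low_sub_r_low_le c)
  also have "\<dots> = delta' p W C / real L / (2 * c) + c / 2"
    by (simp add: sum.distrib delta'_eq_sum sum_divide_distrib[symmetric]
        sum_distrib_left[symmetric] sum_r)
  finally show "measure_pmf.expectation P (\<lambda>g. \<Sum>z\<in>UNIV. \<bar>q_low C g z - r_low C z\<bar>)
    \<le> delta' p W C / real L / (2 * c) + c / 2" .
qed

lemma integrable_l1_dist_q: "integrable (measure_pmf P) (\<lambda>g. l1_dist (q g) r)"
proof -
  have "\<bar>q g z - r z\<bar> \<le> 1" for g z
    using q_nonneg[of g z] q_le_1[of g z] r_nonneg[of z] r_le_1[of z] by auto
  then show ?thesis
    unfolding l1_dist_def
    by (intro Bochner_Integration.integrable_sum integrable_measure_pmf_bounded[where B=1]) auto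
qed

lemma l1_dist_q_r_le: "l1_dist (q g) r \<le> (\<Sum>z\<in>UNIV. \<bar>q_low C g z - r_low C z\<bar> + (q_high C g z + r_high C z))"
  unfolding l1_dist_def
proof (intro sum_mono)
  fix z
  show "\<bar>q g z - r z\<bar> \<le> \<bar>q_low C g z - r_low C z\<bar> + (q_high C g z + r_high C z)"
    using q_eq_q_low_add_q_high[of g z C] r_eq_r_low_add_r_high[of z C] q_high_nonneg[of C g z]
      expectation_W_high_nonneg[of C z] unfolding r_high_def by linarith
qed

lemma expectation_l1_dist_le:
  "measure_pmf.expectation P (\<lambda>g. l1_dist (q g) r) \<le> 2 * delta p W C + sqrt (delta' p W C / real L)"
proof -
  have int_high: "integrable (measure_pmf P) (\<lambda>g. q_high C g z)" for z
    by (rule integrable_measure_pmf_bounded[where B=1])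
       (use q_high_nonneg q_eq_q_low_add_q_high q_low_nonneg q_le_1 in \<open>smt (verit)\<close>)
  have "measure_pmf.expectation P (\<lambda>g. l1_dist (q g) r) \<le>
     measure_pmf.expectation P (\<lambda>g. \<Sum>z\<in>UNIV. \<bar>q_low C g z - r_low C z\<bar> + (q_high C g z + r_high C z))"
    using integrable_abs_q_low_sub_r_low int_high by (intro integral_mono integrable_l1_dist_q l1_dist_q_r_le) auto
  also have "\<dots> = measure_pmf.expectation P (\<lambda>g. \<Sum>z\<in>UNIV. \<bar>q_low C g z - r_low C z\<bar>) + 2 * delta p W C"
    using integrable_abs_q_low_sub_r_low int_high
    by (simp add: Bochner_Integration.integral_sum Bochner_Integration.integral_add expectation_q_high
        sum.distrib delta_eq_sum r_high_def)
  finally show ?thesis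
    using expectation_sum_abs_q_low_sub_r_low_le[of C] by simp
qed

end

section \<open>Maximum-likelihood decoding of a random code\<close>

lemma mult_powr_ratio_eq:
  fixes w c s :: real
  assumes "w \<ge> 0" and "c \<ge> 0" and "s \<ge> 0"
  shows "w * (c / w powr (1 / (1 + s))) powr s = c powr s * w powr (1 / (1 + s))"
proof (cases "w = 0")
  case True
  then show ?thesis using assms by simp
next
  case False
  with assms have w: "w > 0" by simp
  have "(c / w powr (1 / (1 + s))) powr s = c powr s / w powr (s / (1 + s))"
    using w assms by (simp add: powr_divide powr_powr)
  moreover have "w / w powr (s / (1 + s)) = w powr (1 / (1 + s))"
  proof -
    have "w / w powr (s / (1 + s)) = w powr (1 - s / (1 + s))"
      using w by (simp add: powr_diff)
    also have "1 - s / (1 + s) = 1 / (1 + s)"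
      using assms by (simp add: field_simps)
    finally show ?thesis .
  qed
  ultimately show ?thesis
    by (metis times_divide_eq_left times_divide_eq_right mult.commute)
qed

lemma indicator_ex_le_sum:
  assumes "finite J"
  shows "indicator {x. \<exists>j\<in>J. P j x} x \<le> (\<Sum>j\<in>J. indicator {x. P j x} x :: ennreal)"
proof (cases "\<exists>j\<in>J. P j x")
  case True
  then obtain j where "j \<in> J" and "P j x" by blast
  then have "(1 :: ennreal) \<le> (\<Sum>j\<in>J. indicator {x. P j x} x)"
    using member_le_sum[of j J "\<lambda>j. indicator {x. P j x} x :: ennreal"] assms by simp
  with True show ?thesis by simp
qed simp

lemma ennreal_le_mult_of_le:
  fixes a b c :: real
  assumes "a \<le> c * b" and "0 \<le> b" and "0 \<le> c" and "ennreal b \<le> B"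
  shows "ennreal a \<le> ennreal c * B"
proof -
  have "ennreal a \<le> ennreal c * ennreal b"
    using assms by (simp add: ennreal_leI flip: ennreal_mult)
  also have "\<dots> \<le> ennreal c * B"
    using assms(4) by (rule mult_left_mono) simp
  finally show ?thesis .
qed

lemma prob_out_dist_ratio_gt_le:
  fixes W :: "'x \<Rightarrow> 'y pmf"
  assumes C': "C' > 0"
  shows "measure_pmf.prob (out_dist W p) {y. C' * pmf (out_dist W p) y < pmf (W x) y} \<le> 1 / C'"
proof -
  define S where "S = {y. C' * pmf (out_dist W p) y < pmf (W x) y}"
  have "ennreal (measure_pmf.prob (out_dist W p) S) = (\<integral>\<^sup>+y. indicator S y \<partial>out_dist W p)"
    by (simp add: measure_pmf.emeasure_eq_measure)
  also have "\<dots> = (\<integral>\<^sup>+y. ennreal (pmf (out_dist W p) y) * indicator S y \<partial>count_space UNIV)"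
    by (rule nn_integral_measure_pmf)
  also have "\<dots> \<le> (\<integral>\<^sup>+y. ennreal (1 / C') * ennreal (pmf (W x) y) \<partial>count_space UNIV)"
  proof (intro nn_integral_mono)
    fix y
    show "ennreal (pmf (out_dist W p) y) * indicator S y \<le> ennreal (1 / C') * ennreal (pmf (W x) y)"
    proof (cases "y \<in> S")
      case True
      then have "pmf (out_dist W p) y \<le> 1 / C' * pmf (W x) y"
        using C' by (simp add: S_def field_simps)
      then show ?thesis
        using True C' by (simp add: ennreal_mult[symmetric])
    qed simp
  qed
  also have "\<dots> = ennreal (1 / C')"
    by (simp add: nn_integral_cmult nn_integral_pmf)
  finally show ?thesis
    using C' unfolding S_def by (simp add: ennreal_le_iff[symmetric] del: ennreal_le_iff)
qed

text \<open>A random codebook of \<open>N\<close> i.i.d. codewords, decoded by maximum likelihood; ties count as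
  errors, so \<open>ml_error f k\<close> bounds the error probability of codeword \<open>k\<close> under every
  maximum-likelihood decoder.\<close>

locale ml_random_code =
  fixes WB :: "'x \<Rightarrow> 'y pmf" and p :: "'x pmf" and N :: nat and d :: 'x
  assumes N_pos: "N > 0"
begin

definition P :: "(nat \<Rightarrow> 'x) pmf" where
  "P = Pi_pmf {..<N} d (\<lambda>_. p)"

definition P' :: "nat \<Rightarrow> (nat \<Rightarrow> 'x) pmf" where
  "P' k = Pi_pmf ({..<N} - {k}) d (\<lambda>_. p)"

definition ml_error_set :: "(nat \<Rightarrow> 'x) \<Rightarrow> nat \<Rightarrow> 'y set" where
  "ml_error_set f k = {y. \<exists>j\<in>{..<N} - {k}. pmf (WB (f k)) y \<le> pmf (WB (f j)) y}"

definition ml_error :: "(nat \<Rightarrow> 'x) \<Rightarrow> nat \<Rightarrow> real" where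
  "ml_error f k = measure_pmf.prob (WB (f k)) (ml_error_set f k)"

definition gallager_mean :: "real \<Rightarrow> 'y \<Rightarrow> real" where
  "gallager_mean s y = measure_pmf.expectation p (\<lambda>x. pmf (WB x) y powr (1 / (1 + s)))"

lemma ml_error_nonneg: "ml_error f k \<ge> 0"
  unfolding ml_error_def by simp

lemma integrable_ml_error: "integrable (measure_pmf M) (\<lambda>f. ml_error f k)"
  by (rule integrable_measure_pmf_bounded[where B=1]) (simp add: ml_error_def)

lemma gallager_mean_nonneg: "gallager_mean s y \<ge> 0"
  unfolding gallager_mean_def by (intro integral_nonneg_AE AE_pmfI) auto

lemma integrable_pmf_powr: "s \<ge> 0 \<Longrightarrow> integrable (measure_pmf p) (\<lambda>x. pmf (WB x) y powr (1 / (1 + s)))"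
  by (rule integrable_measure_pmf_bounded[where B=1]) (auto intro!: powr_le1 simp: pmf_le_1)

lemma nn_integral_pmf_ge_le:
  assumes w: "w > 0" and s: "s \<ge> 0"
  shows "(\<integral>\<^sup>+x. indicator {x. w \<le> pmf (WB x) y} x \<partial>p) \<le> ennreal (gallager_mean s y / w powr (1 / (1 + s)))"
proof -
  define a where "a = 1 / (1 + s)"
  have a: "a > 0"
    using s by (simp add: a_def)
  have "(\<integral>\<^sup>+x. indicator {x. w \<le> pmf (WB x) y} x \<partial>p) \<le> (\<integral>\<^sup>+x. ennreal (pmf (WB x) y powr a / w powr a) \<partial>p)"
  proof (intro nn_integral_mono)
    fix x
    show "indicator {x. w \<le> pmf (WB x) y} x \<le> ennreal (pmf (WB x) y powr a / w powr a)"
    proof (cases "w \<le> pmf (WB x) y")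
      case True
      then have "w powr a \<le> pmf (WB x) y powr a"
        using w a by (intro powr_mono2) auto
      with True w show ?thesis by simp
    qed simp
  qed
  also have "\<dots> = ennreal (gallager_mean s y / w powr a)"
    unfolding gallager_mean_def a_def using integrable_pmf_powr[OF s]
    by (subst nn_integral_eq_integral) auto
  finally show ?thesis unfolding a_def .
qed

lemma nn_integral_competitor_le:
  assumes k: "k < N" and w: "w > 0" and s: "s \<ge> 0"
  shows "(\<integral>\<^sup>+g. indicator {g. \<exists>j\<in>{..<N} - {k}. w \<le> pmf (WB (g j)) y} g \<partial>P' k)
     \<le> ennreal (real N * gallager_mean s y / w powr (1 / (1 + s)))"
proof -
  define J where "J = {..<N} - {k}"
  define G where "G = gallager_mean s y / w powr (1 / (1 + s))"
  have G: "G \<ge> 0"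
    unfolding G_def using gallager_mean_nonneg by simp
  have "(\<integral>\<^sup>+g. indicator {g. \<exists>j\<in>J. w \<le> pmf (WB (g j)) y} g \<partial>P' k) \<le>
      (\<integral>\<^sup>+g. (\<Sum>j\<in>J. indicator {g. w \<le> pmf (WB (g j)) y} g) \<partial>P' k)"
    by (intro nn_integral_mono indicator_ex_le_sum) (simp add: J_def)
  also have "\<dots> = (\<Sum>j\<in>J. (\<integral>\<^sup>+x. indicator {x. w \<le> pmf (WB x) y} x \<partial>p))"
  proof (subst nn_integral_sum, simp, intro sum.cong refl)
    fix j assume "j \<in> J"
    have "(\<integral>\<^sup>+g. indicator {g. w \<le> pmf (WB (g j)) y} g \<partial>P' k) =
        (\<integral>\<^sup>+g. (\<lambda>x. indicator {x. w \<le> pmf (WB x) y} x) (g j) \<partial>P' k)"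
      by (intro nn_integral_cong) (simp split: split_indicator)
    also have "\<dots> = (\<integral>\<^sup>+x. indicator {x. w \<le> pmf (WB x) y} x \<partial>p)"
      unfolding P'_def using \<open>j \<in> J\<close> by (intro nn_integral_Pi_pmf_component) (auto simp: J_def)
    finally show "(\<integral>\<^sup>+g. indicator {g. w \<le> pmf (WB (g j)) y} g \<partial>P' k) =
        (\<integral>\<^sup>+x. indicator {x. w \<le> pmf (WB x) y} x \<partial>p)" .
  qed
  also have "\<dots> \<le> (\<Sum>j\<in>J. ennreal G)"
    unfolding G_def by (intro sum_mono nn_integral_pmf_ge_le w s)
  also have "\<dots> = ennreal (real (card J) * G)"
    using G by (simp add: ennreal_of_nat_eq_real_of_nat ennreal_mult'')
  also have "\<dots> \<le> ennreal (real N * G)"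
    using G card_mono[of "{..<N}" J] by (intro ennreal_leI mult_right_mono) (auto simp: J_def)
  finally show ?thesis
    unfolding J_def G_def by simp
qed

lemma nn_integral_competitor_le_powr:
  assumes k: "k < N" and w: "w > 0" and s: "0 \<le> s" "s \<le> 1"
  shows "(\<integral>\<^sup>+g. indicator {g. \<exists>j\<in>{..<N} - {k}. w \<le> pmf (WB (g j)) y} g \<partial>P' k)
     \<le> ennreal ((real N * gallager_mean s y / w powr (1 / (1 + s))) powr s)"
proof -
  define v where "v = real N * gallager_mean s y / w powr (1 / (1 + s))"
  have v: "v \<ge> 0"
    unfolding v_def using gallager_mean_nonneg by simp
  have "(\<integral>\<^sup>+g. indicator {g. \<exists>j\<in>{..<N} - {k}. w \<le> pmf (WB (g j)) y} g \<partial>P' k) \<le> (\<integral>\<^sup>+g. 1 \<partial>P' k)"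
    by (intro nn_integral_mono) (simp split: split_indicator)
  with nn_integral_competitor_le[OF k w s(1)]
  have "(\<integral>\<^sup>+g. indicator {g. \<exists>j\<in>{..<N} - {k}. w \<le> pmf (WB (g j)) y} g \<partial>P' k) \<le> min 1 (ennreal v)"
    unfolding v_def by simp
  also have "\<dots> = ennreal (min 1 v)"
    using v min_ennreal[of 1 v] by simp
  also have "\<dots> \<le> ennreal (v powr s)"
    using min_one_le_powr[OF v s] by (rule ennreal_leI)
  finally show ?thesis
    unfolding v_def .
qed

lemma ennreal_ml_error_fun_upd:
  "ennreal (ml_error (g(k := x)) k) =
    (\<integral>\<^sup>+y. indicator {g. \<exists>j\<in>{..<N} - {k}. pmf (WB x) y \<le> pmf (WB (g j)) y} g \<partial>WB x)"
proof -
  have "ml_error_set (g(k := x)) k = {y. \<exists>j\<in>{..<N} - {k}. pmf (WB x) y \<le> pmf (WB (g j)) y}"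
    unfolding ml_error_set_def by auto
  then have "ennreal (ml_error (g(k := x)) k) =
      (\<integral>\<^sup>+y. indicator {y. \<exists>j\<in>{..<N} - {k}. pmf (WB x) y \<le> pmf (WB (g j)) y} y \<partial>WB x)"
    unfolding ml_error_def by (simp add: measure_pmf.emeasure_eq_measure)
  also have "\<dots> = (\<integral>\<^sup>+y. indicator {g. \<exists>j\<in>{..<N} - {k}. pmf (WB x) y \<le> pmf (WB (g j)) y} g \<partial>WB x)"
    by (intro nn_integral_cong) (simp split: split_indicator)
  finally show ?thesis .
qed

lemma nn_integral_gallager_term:
  assumes "s \<ge> 0" and "c \<ge> 0"
  shows "(\<integral>\<^sup>+x. ennreal (c * gallager_mean s y powr s * pmf (WB x) y powr (1 / (1 + s))) \<partial>p) =
    ennreal c * ennreal (gallager_mean s y powr (1 + s))"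
proof -
  have "(\<integral>\<^sup>+x. ennreal (c * gallager_mean s y powr s * pmf (WB x) y powr (1 / (1 + s))) \<partial>p) =
      ennreal (c * gallager_mean s y powr s) * (\<integral>\<^sup>+x. ennreal (pmf (WB x) y powr (1 / (1 + s))) \<partial>p)"
    using assms by (simp add: nn_integral_cmult ennreal_mult)
  also have "(\<integral>\<^sup>+x. ennreal (pmf (WB x) y powr (1 / (1 + s))) \<partial>p) = ennreal (gallager_mean s y)"
    unfolding gallager_mean_def using integrable_pmf_powr[OF assms(1)]
    by (intro nn_integral_eq_integral) auto
  also have "ennreal (c * gallager_mean s y powr s) * ennreal (gallager_mean s y) =
      ennreal c * ennreal (gallager_mean s y powr (1 + s))"
    using gallager_mean_nonneg[of s y] assms
    by (cases "gallager_mean s y = 0") (simp_all add: powr_add ennreal_mult[symmetric] mult.assoc)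
  finally show ?thesis .
qed

lemma expectation_ml_error_le_gallager:
  assumes k: "k < N" and s: "0 \<le> s" "s \<le> 1"
  shows "ennreal (measure_pmf.expectation P (\<lambda>f. ml_error f k)) \<le> ennreal (real N powr s) * gallager_sum s WB p"
proof -
  define a where "a = 1 / (1 + s)"
  define G where "G = gallager_mean s"
  define E :: "'x \<Rightarrow> (nat \<Rightarrow> 'x) \<Rightarrow> 'y \<Rightarrow> ennreal"
    where "E x g y = indicator {g. \<exists>j\<in>{..<N} - {k}. pmf (WB x) y \<le> pmf (WB (g j)) y} g" for x g y
  have "ennreal (measure_pmf.expectation P (\<lambda>f. ml_error f k)) = (\<integral>\<^sup>+f. ennreal (ml_error f k) \<partial>P)"
    by (rule nn_integral_eq_integral[symmetric]) (auto intro: integrable_ml_error simp: ml_error_nonneg)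
  also have "\<dots> = (\<integral>\<^sup>+x. (\<integral>\<^sup>+g. ennreal (ml_error (g(k := x)) k) \<partial>P' k) \<partial>p)"
    unfolding P_def P'_def by (rule nn_integral_Pi_pmf_split) (use k in auto)
  also have "\<dots> = (\<integral>\<^sup>+x. (\<integral>\<^sup>+y. (\<integral>\<^sup>+g. E x g y \<partial>P' k) \<partial>WB x) \<partial>p)"
    unfolding ennreal_ml_error_fun_upd E_def by (subst nn_integral_swap_pmf) rule
  also have "\<dots> \<le> (\<integral>\<^sup>+x. (\<integral>\<^sup>+y. ennreal ((real N * G y / pmf (WB x) y powr a) powr s) \<partial>WB x) \<partial>p)"
    unfolding E_def G_def a_def
    by (intro nn_integral_mono nn_integral_mono_AE AE_pmfI nn_integral_competitor_le_powr k s)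
       (simp add: pmf_positive)
  also have "\<dots> = (\<integral>\<^sup>+x. (\<integral>\<^sup>+y. ennreal (real N powr s * G y powr s * pmf (WB x) y powr a)
      \<partial>count_space UNIV) \<partial>p)"
    unfolding nn_integral_measure_pmf a_def using s G_def gallager_mean_nonneg
    by (intro nn_integral_cong)
       (simp add: ennreal_mult[symmetric] mult_powr_ratio_eq powr_mult mult.assoc)
  also have "\<dots> = (\<integral>\<^sup>+y. ennreal (real N powr s) * ennreal (G y powr (1 + s)) \<partial>count_space UNIV)"
    unfolding a_def G_def using s
    by (subst nn_integral_swap_pmf_count_space) (simp add: nn_integral_gallager_term)
  also have "\<dots> = ennreal (real N powr s) * gallager_sum s WB p"
    unfolding gallager_sum_def G_def gallager_mean_def by (simp add: nn_integral_cmult)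
  finally show ?thesis .
qed

lemma ml_error_le_sum:
  "ml_error f k \<le> measure_pmf.prob (WB (f k)) {y. pmf (WB (f k)) y \<le> C' * pmf (out_dist WB p) y}
    + (\<Sum>j\<in>{..<N} - {k}. measure_pmf.prob (WB (f k)) {y. C' * pmf (out_dist WB p) y < pmf (WB (f j)) y})"
proof -
  define A where "A = {y. pmf (WB (f k)) y \<le> C' * pmf (out_dist WB p) y}"
  define B where "B j = {y. C' * pmf (out_dist WB p) y < pmf (WB (f j)) y}" for j
  have "ml_error_set f k \<subseteq> A \<union> (\<Union>j\<in>{..<N} - {k}. B j)"
  proof
    fix y
    assume "y \<in> ml_error_set f k"
    then obtain j where "j \<in> {..<N} - {k}" and "pmf (WB (f k)) y \<le> pmf (WB (f j)) y"
      unfolding ml_error_set_def by blast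
    then show "y \<in> A \<union> (\<Union>j\<in>{..<N} - {k}. B j)"
    proof (cases "y \<in> A")
      case False
      with \<open>pmf (WB (f k)) y \<le> pmf (WB (f j)) y\<close> have "y \<in> B j"
        by (auto simp: A_def B_def not_le)
      with \<open>j \<in> {..<N} - {k}\<close> show ?thesis by blast
    qed simp
  qed
  then have "ml_error f k \<le> measure_pmf.prob (WB (f k)) (A \<union> (\<Union>j\<in>{..<N} - {k}. B j))"
    unfolding ml_error_def by (intro measure_pmf.finite_measure_mono) auto
  also have "\<dots> \<le> measure_pmf.prob (WB (f k)) A + measure_pmf.prob (WB (f k)) (\<Union>j\<in>{..<N} - {k}. B j)"
    by (rule measure_subadditive) (auto simp: measure_pmf.emeasure_eq_measure)
  also have "measure_pmf.prob (WB (f k)) (\<Union>j\<in>{..<N} - {k}. B j) \<le>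
      (\<Sum>j\<in>{..<N} - {k}. measure_pmf.prob (WB (f k)) (B j))"
    by (rule measure_pmf.finite_measure_subadditive_finite) auto
  finally show ?thesis
    unfolding A_def B_def by simp
qed

lemma expectation_prob_competitor_ratio_gt_le:
  assumes "j < N" and "k < N" and "j \<noteq> k" and C': "C' > 0"
  shows "measure_pmf.expectation P
    (\<lambda>f. measure_pmf.prob (WB (f k)) {y. C' * pmf (out_dist WB p) y < pmf (WB (f j)) y}) \<le> 1 / C'"
proof -
  define B where "B x' = {y. C' * pmf (out_dist WB p) y < pmf (WB x') y}" for x'
  have "measure_pmf.expectation P (\<lambda>f. measure_pmf.prob (WB (f k)) (B (f j))) =
      measure_pmf.expectation p (\<lambda>x'. measure_pmf.expectation (Pi_pmf ({..<N} - {j}) d (\<lambda>_. p))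
        (\<lambda>g. measure_pmf.prob (WB (g k)) (B x')))"
    unfolding P_def using assms by (subst expectation_Pi_pmf_split[where k=j and K=1]) auto
  also have "\<dots> = measure_pmf.expectation p (\<lambda>x'. measure_pmf.prob (out_dist WB p) (B x'))"
    using assms unfolding out_dist_def measure_bind_pmf_eq_expectation
    by (subst expectation_Pi_pmf_component) auto
  also have "\<dots> \<le> measure_pmf.expectation p (\<lambda>_. 1 / C')"
    unfolding B_def using prob_out_dist_ratio_gt_le[OF C']
    by (intro integral_mono) (auto intro!: integrable_measure_pmf_bounded[where B=1])
  finally show ?thesis
    unfolding B_def by simp
qed

lemma expectation_ml_error_le_threshold:
  assumes k: "k < N" and C': "C' > 0"
  shows "measure_pmf.expectation P (\<lambda>f. ml_error f k) \<le>
     measure_pmf.expectation p (\<lambda>x. measure_pmf.prob (WB x) {y. pmf (WB x) y / pmf (out_dist WB p) y \<le> C'})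
     + real N / C'"
proof -
  define A where "A x = {y. pmf (WB x) y \<le> C' * pmf (out_dist WB p) y}" for x
  define B where "B x' = {y. C' * pmf (out_dist WB p) y < pmf (WB x') y}" for x'
  have int: "integrable (measure_pmf M) (\<lambda>f. measure_pmf.prob (WB (f k)) (S f))"
    for M :: "(nat \<Rightarrow> 'x) pmf" and S
    by (rule integrable_measure_pmf_bounded[where B=1]) simp
  have "measure_pmf.expectation P (\<lambda>f. ml_error f k) \<le> measure_pmf.expectation P
      (\<lambda>f. measure_pmf.prob (WB (f k)) (A (f k)) + (\<Sum>j\<in>{..<N} - {k}. measure_pmf.prob (WB (f k)) (B (f j))))"
    unfolding A_def B_def using int by (intro integral_mono integrable_ml_error ml_error_le_sum) auto
  also have "\<dots> = measure_pmf.expectation P (\<lambda>f. measure_pmf.prob (WB (f k)) (A (f k)))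
      + (\<Sum>j\<in>{..<N} - {k}. measure_pmf.expectation P (\<lambda>f. measure_pmf.prob (WB (f k)) (B (f j))))"
    using int by (simp add: Bochner_Integration.integral_add Bochner_Integration.integral_sum)
  also have "measure_pmf.expectation P (\<lambda>f. measure_pmf.prob (WB (f k)) (A (f k)))
      = measure_pmf.expectation p (\<lambda>x. measure_pmf.prob (WB x) (A x))"
    unfolding P_def using k by (intro expectation_Pi_pmf_component) auto
  also have "\<dots> \<le> measure_pmf.expectation p
      (\<lambda>x. measure_pmf.prob (WB x) {y. pmf (WB x) y / pmf (out_dist WB p) y \<le> C'})"
  proof (intro integral_mono integrable_measure_pmf_bounded[where B=1] measure_pmf.finite_measure_mono subsetI)
    fix x y
    assume "y \<in> A x"
    then show "y \<in> {y. pmf (WB x) y / pmf (out_dist WB p) y \<le> C'}"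
      using C' by (cases "pmf (out_dist WB p) y = 0") (auto simp: A_def divide_le_eq order_less_le)
  qed auto
  also have "(\<Sum>j\<in>{..<N} - {k}. measure_pmf.expectation P (\<lambda>f. measure_pmf.prob (WB (f k)) (B (f j))))
      \<le> (\<Sum>j\<in>{..<N} - {k}. 1 / C')"
    unfolding B_def using k C' by (intro sum_mono expectation_prob_competitor_ratio_gt_le) auto
  also have "\<dots> \<le> real N / C'"
    using C' card_Diff1_le[of "{..<N}" k] by (simp add: divide_right_mono)
  finally show ?thesis by simp
qed

end

section \<open>Random block codes\<close>

definition block_input :: "nat \<Rightarrow> (nat \<Rightarrow> 'x) \<Rightarrow> nat \<Rightarrow> 'x pmf" where
  "block_input L f i = map_pmf (\<lambda>l. f (i * L + l)) (pmf_of_set {..<L})"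

definition ml_decoder :: "('x \<Rightarrow> 'y pmf) \<Rightarrow> nat \<Rightarrow> (nat \<Rightarrow> 'x) \<Rightarrow> 'y \<Rightarrow> nat" where
  "ml_decoder W N f y = (LEAST j. j < N \<and> (\<forall>k<N. pmf (W (f k)) y \<le> pmf (W (f j)) y))"

definition block_decoder :: "('x \<Rightarrow> 'y pmf) \<Rightarrow> nat \<Rightarrow> nat \<Rightarrow> (nat \<Rightarrow> 'x) \<Rightarrow> nat \<Rightarrow> 'y set" where
  "block_decoder W N L f i = {y. ml_decoder W N f y div L = i}"

lemma expectation_block_input:
  fixes h :: "'x \<Rightarrow> real"
  assumes "L > 0"
  shows "measure_pmf.expectation (block_input L f i) h = (\<Sum>l<L. h (f (i * L + l))) / real L"
  unfolding block_input_def using assms by (subst integral_map_pmf, subst integral_pmf_of_set) auto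

lemma pmf_out_dist_block_input:
  "L > 0 \<Longrightarrow> pmf (out_dist W (block_input L f i)) z = (\<Sum>l<L. pmf (W (f (i * L + l))) z) / real L"
  unfolding out_dist_def pmf_bind by (rule expectation_block_input)

lemma prob_out_dist_block_input:
  "L > 0 \<Longrightarrow> measure_pmf.prob (out_dist W (block_input L f i)) S =
    (\<Sum>l<L. measure_pmf.prob (W (f (i * L + l))) S) / real L"
  unfolding out_dist_def measure_bind_pmf_eq_expectation by (rule expectation_block_input)

lemma ml_decoder_is_max:
  assumes "N > 0"
  shows "ml_decoder W N f y < N \<and> (\<forall>k<N. pmf (W (f k)) y \<le> pmf (W (f (ml_decoder W N f y))) y)"
proof -
  have "Max ((\<lambda>k. pmf (W (f k)) y) ` {..<N}) \<in> (\<lambda>k. pmf (W (f k)) y) ` {..<N}"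
    using assms by (intro Max_in) auto
  then obtain j where "j < N" and "pmf (W (f j)) y = Max ((\<lambda>k. pmf (W (f k)) y) ` {..<N})"
    by auto
  then have "j < N \<and> (\<forall>k<N. pmf (W (f k)) y \<le> pmf (W (f j)) y)"
    by simp
  then show ?thesis
    unfolding ml_decoder_def by (rule LeastI)
qed

lemma is_wiretap_code_block_decoder: "is_wiretap_code M Q (block_decoder W N L f)"
  unfolding is_wiretap_code_def disjoint_family_on_def block_decoder_def by auto

lemma sum_lessThan_mult_blocks:
  fixes g :: "nat \<Rightarrow> 'a::comm_monoid_add"
  shows "(\<Sum>k<m * L. g k) = (\<Sum>i<m. \<Sum>l<L. g (i * L + l))"
proof (induction m)
  case (Suc m)
  have "(\<Sum>k<Suc m * L. g k) = (\<Sum>k<m * L. g k) + (\<Sum>k\<in>{m * L..<m * L + L}. g k)"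
    by (simp add: sum.atLeastLessThan_concat atLeast0LessThan[symmetric] add.commute)
  also have "(\<Sum>k\<in>{m * L..<m * L + L}. g k) = (\<Sum>l<L. g (m * L + l))"
    using sum.shift_bounds_nat_ivl[of g 0 "m * L" L] by (simp add: atLeast0LessThan add.commute)
  finally show ?case
    using Suc by simp
qed simp

lemma block_index_less:
  fixes i l M L :: nat
  assumes "i < M" and "l < L"
  shows "i * L + l < M * L"
proof -
  have "i * L + l < Suc i * L"
    using assms by simp
  also have "\<dots> \<le> M * L"
    using assms by (intro mult_right_mono) auto
  finally show ?thesis .
qed

context ml_random_code
begin

lemma eps_B_block_code_le:
  assumes N: "N = M * L" and L: "L > 0"
  shows "eps_B WB M (block_input L f) (block_decoder WB N L f) \<le> (\<Sum>k<N. ml_error f k) / real N"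
proof -
  have M: "M > 0"
    using N_pos N by simp
  have decoding_error: "- block_decoder WB N L f i \<subseteq> ml_error_set f (i * L + l)" if "i < M" "l < L" for i l
  proof
    fix y
    assume "y \<in> - block_decoder WB N L f i"
    then have "ml_decoder WB N f y \<noteq> i * L + l"
      using that by (auto simp: block_decoder_def)
    then show "y \<in> ml_error_set f (i * L + l)"
      unfolding ml_error_set_def using ml_decoder_is_max[OF N_pos, of WB f y] block_index_less[OF that] N
      by auto
  qed
  have "eps_B WB M (block_input L f) (block_decoder WB N L f) =
      (\<Sum>i<M. (\<Sum>l<L. measure_pmf.prob (WB (f (i * L + l))) (- block_decoder WB N L f i)) / real L) / real M"
    unfolding eps_B_def by (simp add: prob_out_dist_block_input[OF L])
  also have "\<dots> \<le> (\<Sum>i<M. (\<Sum>l<L. ml_error f (i * L + l)) / real L) / real M"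
    unfolding ml_error_def using decoding_error
    by (intro divide_right_mono sum_mono measure_pmf.finite_measure_mono) auto
  also have "\<dots> = (\<Sum>k<N. ml_error f k) / real N"
    unfolding N sum_lessThan_mult_blocks using L M by (simp add: sum_divide_distrib[symmetric])
  finally show ?thesis .
qed

end

lemma mean_le:
  fixes a :: "nat \<Rightarrow> real"
  assumes "N > 0" and "\<And>k. k < N \<Longrightarrow> a k \<le> b"
  shows "(\<Sum>k<N. a k) / real N \<le> b"
proof -
  have "(\<Sum>k<N. a k) \<le> (\<Sum>k<N. b)"
    using assms(2) by (intro sum_mono) auto
  with assms(1) show ?thesis
    by (simp add: divide_le_eq mult.commute)
qed

lemma ex_ge_mean:
  fixes a :: "nat \<Rightarrow> real"
  assumes "N > 0"
  shows "\<exists>k<N. (\<Sum>j<N. a j) / real N \<le> a k"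
proof (rule ccontr)
  assume "\<not> ?thesis"
  then have "(\<Sum>j<N. a j) < (\<Sum>j<N. (\<Sum>j<N. a j) / real N)"
    using assms by (intro sum_strict_mono) (auto simp: not_le)
  then show False
    using assms by simp
qed

locale wiretap_block_code =
  fixes WB :: "'x \<Rightarrow> 'y pmf" and WE :: "'x \<Rightarrow> 'z::finite pmf" and p :: "'x pmf" and L M :: nat
  assumes L_pos: "L > 0" and M_pos: "M > 0"
begin

sublocale bob: ml_random_code WB p "M * L" undefined
  by unfold_locales (simp add: L_pos M_pos)

lemma message_block: "i < M \<Longrightarrow> iid_block L {..<M * L} (\<lambda>l. i * L + l)"
  by unfold_locales (auto simp: inj_on_def L_pos intro: block_index_less)

lemma message_block_P: "i < M \<Longrightarrow> iid_block.P p {..<M * L} undefined = bob.P"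
  by (simp add: iid_block.P_def[OF message_block] bob.P_def)

lemma message_block_r: "i < M \<Longrightarrow> iid_block.r WE p = pmf (out_dist WE p)"
  by (simp add: iid_block.r_def[OF message_block] fun_eq_iff)

lemma message_block_q: "i < M \<Longrightarrow> iid_block.q WE L (\<lambda>l. i * L + l) f = pmf (out_dist WE (block_input L f i))"
  by (simp add: iid_block.q_def[OF message_block] pmf_out_dist_block_input[OF L_pos] fun_eq_iff)

lemma eve_output_support:
  assumes i: "i < M" and "f \<in> set_pmf bob.P" and "pmf (out_dist WE (block_input L f i)) z > 0"
  shows "pmf (out_dist WE p) z > 0"
proof -
  interpret iid_block WE p L "{..<M * L}" "\<lambda>l. i * L + l" undefined
    by (rule message_block[OF i])
  show ?thesis
    using q_support assms unfolding message_block_P[OF i] message_block_q[OF i] message_block_r[OF i] by blast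
qed

lemma KL_div_eve_output_nonneg:
  assumes i: "i < M" and "f \<in> set_pmf bob.P"
  shows "KL_div (pmf (out_dist WE (block_input L f i))) (pmf (out_dist WE p)) \<ge> 0"
proof -
  interpret iid_block WE p L "{..<M * L}" "\<lambda>l. i * L + l" undefined
    by (rule message_block[OF i])
  show ?thesis
    using KL_div_q_nonneg assms unfolding message_block_P[OF i] message_block_q[OF i] message_block_r[OF i] by blast
qed

lemma integrable_KL_div_eve_output:
  assumes i: "i < M"
  shows "integrable (measure_pmf bob.P)
    (\<lambda>f. KL_div (pmf (out_dist WE (block_input L f i))) (pmf (out_dist WE p)))"
proof -
  interpret iid_block WE p L "{..<M * L}" "\<lambda>l. i * L + l" undefined
    by (rule message_block[OF i])
  show ?thesis
    using integrable_KL_div_q unfolding message_block_P[OF i] message_block_q[OF i] message_block_r[OF i] .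
qed

lemma integrable_l1_dist_eve_output:
  assumes i: "i < M"
  shows "integrable (measure_pmf bob.P)
    (\<lambda>f. l1_dist (pmf (out_dist WE (block_input L f i))) (pmf (out_dist WE p)))"
proof -
  interpret iid_block WE p L "{..<M * L}" "\<lambda>l. i * L + l" undefined
    by (rule message_block[OF i])
  show ?thesis
    using integrable_l1_dist_q unfolding message_block_P[OF i] message_block_q[OF i] message_block_r[OF i] .
qed

lemma expectation_KL_div_eve_output_le_delta:
  assumes i: "i < M"
  shows "measure_pmf.expectation bob.P
      (\<lambda>f. KL_div (pmf (out_dist WE (block_input L f i))) (pmf (out_dist WE p)))
    \<le> eta (delta p WE C) + delta p WE C * ln (real CARD('z)) + delta' p WE C / real L"
proof -
  interpret iid_block WE p L "{..<M * L}" "\<lambda>l. i * L + l" undefined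
    by (rule message_block[OF i])
  show ?thesis
    using expectation_KL_div_le_delta unfolding message_block_P[OF i] message_block_q[OF i] message_block_r[OF i] .
qed

lemma expectation_KL_div_eve_output_le_phi:
  assumes i: "i < M" and "-1 < t" and "t < 0"
  shows "measure_pmf.expectation bob.P
      (\<lambda>f. KL_div (pmf (out_dist WE (block_input L f i))) (pmf (out_dist WE p)))
    \<le> ln (1 + real L powr t * exp (phi t WE p)) / (- t)"
proof -
  interpret iid_block WE p L "{..<M * L}" "\<lambda>l. i * L + l" undefined
    by (rule message_block[OF i])
  show ?thesis
    using expectation_KL_div_le_phi[OF assms(2,3)] unfolding message_block_P[OF i] message_block_q[OF i] message_block_r[OF i] .
qed

lemma expectation_l1_dist_eve_output_le:
  assumes i: "i < M"
  shows "measure_pmf.expectation bob.P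
      (\<lambda>f. l1_dist (pmf (out_dist WE (block_input L f i))) (pmf (out_dist WE p)))
    \<le> 2 * delta p WE C + sqrt (delta' p WE C / real L)"
proof -
  interpret iid_block WE p L "{..<M * L}" "\<lambda>l. i * L + l" undefined
    by (rule message_block[OF i])
  show ?thesis
    using expectation_l1_dist_le unfolding message_block_P[OF i] message_block_q[OF i] message_block_r[OF i] .
qed

definition bob_error :: "(nat \<Rightarrow> 'x) \<Rightarrow> real" where
  "bob_error f = (\<Sum>k<M * L. bob.ml_error f k) / real (M * L)"

definition eve_divergence :: "(nat \<Rightarrow> 'x) \<Rightarrow> real" where
  "eve_divergence f =
    (\<Sum>i<M. KL_div (pmf (out_dist WE (block_input L f i))) (pmf (out_dist WE p))) / real M"

definition eve_distance :: "(nat \<Rightarrow> 'x) \<Rightarrow> real" where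
  "eve_distance f =
    2 * (\<Sum>i<M. l1_dist (pmf (out_dist WE (block_input L f i))) (pmf (out_dist WE p))) / real M"

lemma eps_B_le_bob_error: "eps_B WB M (block_input L f) (block_decoder WB (M * L) L f) \<le> bob_error f"
  unfolding bob_error_def by (rule bob.eps_B_block_code_le[OF refl L_pos])

lemma I_E_le_eve_divergence:
  assumes f: "f \<in> set_pmf bob.P"
  shows "I_E WE M (block_input L f) \<le> eve_divergence f"
proof -
  have "(\<Sum>i<M. KL_div (pmf (out_dist WE (block_input L f i)))
      (\<lambda>z. (\<Sum>i<M. pmf (out_dist WE (block_input L f i)) z) / real M))
    \<le> (\<Sum>i<M. KL_div (pmf (out_dist WE (block_input L f i))) (pmf (out_dist WE p)))"
    by (rule sum_KL_div_mixture_le[OF M_pos]) (auto intro: sum_pmf_eq_1 eve_output_support[OF _ f])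
  then show ?thesis
    unfolding I_E_def eve_divergence_def code_out_mix_def using M_pos by (simp add: divide_right_mono)
qed

lemma d_E_le_eve_distance: "d_E WE M (block_input L f) \<le> eve_distance f"
  unfolding d_E_def eve_distance_def by (rule pairwise_l1_dist_avg_le)

lemma bob_error_nonneg: "bob_error f \<ge> 0"
  unfolding bob_error_def by (intro divide_nonneg_nonneg sum_nonneg bob.ml_error_nonneg) auto

lemma eve_divergence_nonneg: "f \<in> set_pmf bob.P \<Longrightarrow> eve_divergence f \<ge> 0"
  unfolding eve_divergence_def by (intro divide_nonneg_nonneg sum_nonneg KL_div_eve_output_nonneg) auto

lemma eve_distance_nonneg: "eve_distance f \<ge> 0"
  unfolding eve_distance_def l1_dist_def by (intro divide_nonneg_nonneg mult_nonneg_nonneg sum_nonneg) auto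

lemma integrable_bob_error: "integrable (measure_pmf bob.P) bob_error"
  unfolding bob_error_def using bob.integrable_ml_error by auto

lemma integrable_eve_divergence: "integrable (measure_pmf bob.P) eve_divergence"
  unfolding eve_divergence_def
  by (intro integrable_divide Bochner_Integration.integrable_sum integrable_KL_div_eve_output) auto

lemma integrable_eve_distance: "integrable (measure_pmf bob.P) eve_distance"
  unfolding eve_distance_def
  by (intro integrable_divide integrable_mult_right Bochner_Integration.integrable_sum
      integrable_l1_dist_eve_output) auto

lemma expectation_bob_error_le_gallager:
  assumes "0 \<le> s" and "s \<le> 1"
  shows "ennreal (measure_pmf.expectation bob.P bob_error) \<le>
    ennreal ((real M * real L) powr s) * gallager_sum s WB p"
proof -
  have "measure_pmf.expectation bob.P bob_error =
      (\<Sum>k<M * L. measure_pmf.expectation bob.P (\<lambda>f. bob.ml_error f k)) / real (M * L)"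
    unfolding bob_error_def using bob.integrable_ml_error by (simp add: Bochner_Integration.integral_sum)
  then obtain k where "k < M * L"
    and "measure_pmf.expectation bob.P bob_error \<le> measure_pmf.expectation bob.P (\<lambda>f. bob.ml_error f k)"
    using ex_ge_mean[OF bob.N_pos] by fastforce
  then have "ennreal (measure_pmf.expectation bob.P bob_error) \<le>
      ennreal (measure_pmf.expectation bob.P (\<lambda>f. bob.ml_error f k))"
    by (intro ennreal_leI) simp
  also have "\<dots> \<le> ennreal ((real M * real L) powr s) * gallager_sum s WB p"
    using bob.expectation_ml_error_le_gallager[OF \<open>k < M * L\<close> assms] by simp
  finally show ?thesis .
qed

lemma expectation_bob_error_le_threshold:
  assumes "C' > 0"
  shows "measure_pmf.expectation bob.P bob_error \<le> measure_pmf.expectation p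
    (\<lambda>x. measure_pmf.prob (WB x) {y. pmf (WB x) y / pmf (out_dist WB p) y \<le> C'}) + real M * real L / C'"
proof -
  have "measure_pmf.expectation bob.P bob_error =
      (\<Sum>k<M * L. measure_pmf.expectation bob.P (\<lambda>f. bob.ml_error f k)) / real (M * L)"
    unfolding bob_error_def using bob.integrable_ml_error by (simp add: Bochner_Integration.integral_sum)
  also have "\<dots> \<le> measure_pmf.expectation p
      (\<lambda>x. measure_pmf.prob (WB x) {y. pmf (WB x) y / pmf (out_dist WB p) y \<le> C'}) + real (M * L) / C'"
    using bob.N_pos bob.expectation_ml_error_le_threshold[OF _ assms]
    by (intro mean_le) auto
  finally show ?thesis by simp
qed

lemma expectation_eve_divergence:
  "measure_pmf.expectation bob.P eve_divergence =
    (\<Sum>i<M. measure_pmf.expectation bob.P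
      (\<lambda>f. KL_div (pmf (out_dist WE (block_input L f i))) (pmf (out_dist WE p)))) / real M"
  unfolding eve_divergence_def using integrable_KL_div_eve_output
  by (simp add: Bochner_Integration.integral_sum)

lemma expectation_eve_divergence_le_delta:
  "measure_pmf.expectation bob.P eve_divergence \<le>
    eta (delta p WE C) + delta p WE C * ln (real CARD('z)) + delta' p WE C / real L"
  unfolding expectation_eve_divergence using M_pos expectation_KL_div_eve_output_le_delta
  by (intro mean_le) auto

lemma expectation_eve_divergence_le_phi:
  assumes "-1 < t" and "t < 0"
  shows "measure_pmf.expectation bob.P eve_divergence \<le> ln (1 + real L powr t * exp (phi t WE p)) / (- t)"
  unfolding expectation_eve_divergence using M_pos expectation_KL_div_eve_output_le_phi[OF _ assms]
  by (intro mean_le) auto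

lemma expectation_eve_distance_le:
  "measure_pmf.expectation bob.P eve_distance \<le> 2 * (2 * delta p WE C + sqrt (delta' p WE C / real L))"
proof -
  have "measure_pmf.expectation bob.P eve_distance = 2 * ((\<Sum>i<M. measure_pmf.expectation bob.P
      (\<lambda>f. l1_dist (pmf (out_dist WE (block_input L f i))) (pmf (out_dist WE p)))) / real M)"
    unfolding eve_distance_def using integrable_l1_dist_eve_output
    by (simp add: Bochner_Integration.integral_sum)
  also have "\<dots> \<le> 2 * (2 * delta p WE C + sqrt (delta' p WE C / real L))"
    using M_pos expectation_l1_dist_eve_output_le by (intro mult_left_mono mean_le) auto
  finally show ?thesis .
qed

lemma ex_good_codebook:
  "\<exists>f\<in>set_pmf bob.P.
     bob_error f \<le> 3 * measure_pmf.expectation bob.P bob_error \<and>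
     eve_divergence f \<le> 3 * measure_pmf.expectation bob.P eve_divergence \<and>
     eve_distance f \<le> 3 * measure_pmf.expectation bob.P eve_distance"
proof -
  define X where "X i = (if i = 0 then bob_error else if i = 1 then eve_divergence else eve_distance)"
    for i :: nat
  have "\<exists>f\<in>set_pmf bob.P. \<forall>i\<in>{0, 1, 2}. X i f \<le> real (card {0, 1, 2 :: nat}) * measure_pmf.expectation bob.P (X i)"
    unfolding X_def
    using integrable_bob_error integrable_eve_divergence integrable_eve_distance
      bob_error_nonneg eve_divergence_nonneg eve_distance_nonneg
    by (intro ex_set_pmf_le_card_mult_expectations) auto
  then show ?thesis
    unfolding X_def by simp
qed

end

theorem theorem3:
  fixes WB :: "'x::countable \<Rightarrow> 'y::countable pmf"
    and WE :: "'x \<Rightarrow> 'z::finite pmf"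
    and L M :: nat and C C' :: real and p :: "'x pmf"
  assumes "L > 0" and "M > 0" and "C > 0" and "C' > 0"
  shows "\<exists>(Q :: nat \<Rightarrow> 'x pmf) (D :: nat \<Rightarrow> 'y set).
     is_wiretap_code M Q D \<and>
     (\<forall>s\<in>{0..1}. ennreal (eps_B WB M Q D)
        \<le> 3 * ennreal ((real M * real L) powr s) * gallager_sum s WB p) \<and>
     eps_B WB M Q D \<le> 3 * (measure_pmf.expectation p
        (\<lambda>x. measure_pmf.prob (WB x)
           {y. pmf (WB x) y / pmf (out_dist WB p) y \<le> C'}) + real M * real L / C') \<and>
     I_E WE M Q \<le> 3 * (eta (delta p WE C) + delta p WE C * ln (real CARD('z))
        + delta' p WE C / real L) \<and>
     (\<forall>t\<in>{-1/2..<0}. I_E WE M Q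
        \<le> 3 * (ln (1 + real L powr t * exp (phi t WE p)) / (- t))) \<and>
     d_E WE M Q \<le> 6 * (2 * delta p WE C + sqrt (delta' p WE C / real L))"
proof -
  interpret wiretap_block_code WB WE p L M
    using assms by unfold_locales auto
  obtain f where f: "f \<in> set_pmf bob.P"
    and bob: "bob_error f \<le> 3 * measure_pmf.expectation bob.P bob_error"
    and eve_I: "eve_divergence f \<le> 3 * measure_pmf.expectation bob.P eve_divergence"
    and eve_d: "eve_distance f \<le> 3 * measure_pmf.expectation bob.P eve_distance"
    using ex_good_codebook by blast
  have eps_B: "eps_B WB M (block_input L f) (block_decoder WB (M * L) L f) \<le>
      3 * measure_pmf.expectation bob.P bob_error"
    using eps_B_le_bob_error[of f] bob by linarith
  have I_E: "I_E WE M (block_input L f) \<le> 3 * measure_pmf.expectation bob.P eve_divergence"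
    using I_E_le_eve_divergence[OF f] eve_I by linarith
  have d_E: "d_E WE M (block_input L f) \<le> 3 * measure_pmf.expectation bob.P eve_distance"
    using d_E_le_eve_distance[of f] eve_d by linarith
  have gallager: "ennreal (eps_B WB M (block_input L f) (block_decoder WB (M * L) L f)) \<le>
      3 * ennreal ((real M * real L) powr s) * gallager_sum s WB p" if "s \<in> {0..1}" for s
    using ennreal_le_mult_of_le[OF eps_B _ _ expectation_bob_error_le_gallager] that bob_error_nonneg
    by (simp add: integral_nonneg_AE mult.assoc)
  show ?thesis
    using is_wiretap_code_block_decoder gallager
      order_trans[OF eps_B mult_left_mono[OF expectation_bob_error_le_threshold[OF assms(4)]]]
      order_trans[OF I_E mult_left_mono[OF expectation_eve_divergence_le_delta]]
      order_trans[OF I_E mult_left_mono[OF expectation_eve_divergence_le_phi]]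
      order_trans[OF d_E mult_left_mono[OF expectation_eve_distance_le]]
    by (intro exI[of _ "block_input L f"] exI[of _ "block_decoder WB (M * L) L f"] conjI ballI) auto
qed

end
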